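(* For bipartite matching prophet secretary (defined in context) there exist fixed prices $\tau_1,\dots,\tau_m\ge0$ (with tie probabilities $\theta_1,\dots,\theta_m\in[0,1]$) such that the following randomized recommendation algorithm has expected welfare at least $(1-1/e)\,\mathbb{E}[\mathrm{OPT}(\mathbf v)]$: when buyer $i$ arrives with value vector $v_i$, compute $p_k(v_i)=\Pr_{\mathbf v_{-i}}[(i,k)\in\mathcal M(v_i,\mathbf v_{-i})]$ for each item $k$; select a candidate item $k$ with probability $p_k(v_i)$ (and no candidate with probability $1-\sum_kp_k(v_i)$) using independent randomness; if a candidate $k$ is selected and still unsold, offer it at price $\tau_k$, and the buyer buys it if $v_{ik}>\tau_k$, or if $v_{ik}=\tau_k$ with independent probability $\theta_k$.
   Context: Setting: $n$ unit-demand buyers and $m$ items; buyer $i$ has a random nonnegative value vector $v_i=(v_{ik})_k$, independent across buyers, and arrives at an independent uniform time $T_i\in[0,1]$. $\mathcal M(\mathbf v)$ denotes a maximum-weight matching for weights $v_{ik}$, chosen by a fixed deterministic rule, and $\mathrm{OPT}(\mathbf v)$ its weight. Welfare is the sum over buyers of $v_{ik}$ for the item $k$ each buys. *)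

theory Defs
  imports "HOL-Probability.Probability"
begin

text \<open>Buyers are 0..<n, items are 0..<m. A value profile is V :: nat => nat => real,
  where V i k is buyer i's value for item k.\<close>

definition is_matching :: "nat \<Rightarrow> nat \<Rightarrow> (nat \<times> nat) set \<Rightarrow> bool" where
  "is_matching n m A \<longleftrightarrow> A \<subseteq> {..<n} \<times> {..<m} \<and>
     (\<forall>(i,k)\<in>A. \<forall>(i',k')\<in>A. (i = i' \<longleftrightarrow> k = k'))"

definition match_weight :: "(nat \<Rightarrow> nat \<Rightarrow> real) \<Rightarrow> (nat \<times> nat) set \<Rightarrow> real" where
  "match_weight V A = (\<Sum>(i,k)\<in>A. V i k)"

definition is_max_weight_matching ::
  "nat \<Rightarrow> nat \<Rightarrow> (nat \<Rightarrow> nat \<Rightarrow> real) \<Rightarrow> (nat \<times> nat) set \<Rightarrow> bool" where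
  "is_max_weight_matching n m V A \<longleftrightarrow> is_matching n m A \<and>
     (\<forall>B. is_matching n m B \<longrightarrow> match_weight V B \<le> match_weight V A)"

definition value_space :: "nat \<Rightarrow> (nat \<Rightarrow> real) measure" where
  "value_space m = (\<Pi>\<^sub>M k\<in>{..<m}. borel)"

definition profile_space :: "nat \<Rightarrow> nat \<Rightarrow> (nat \<Rightarrow> nat \<Rightarrow> real) measure" where
  "profile_space n m = (\<Pi>\<^sub>M i\<in>{..<n}. value_space m)"

definition OPT :: "((nat \<Rightarrow> nat \<Rightarrow> real) \<Rightarrow> (nat \<times> nat) set) \<Rightarrow> (nat \<Rightarrow> nat \<Rightarrow> real) \<Rightarrow> real" where
  "OPT M V = match_weight V (M V)"

definition rec_prob ::
  "nat \<Rightarrow> (nat \<Rightarrow> (nat \<Rightarrow> real) measure) \<Rightarrow> ((nat \<Rightarrow> nat \<Rightarrow> real) \<Rightarrow> (nat \<times> nat) set)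
     \<Rightarrow> nat \<Rightarrow> (nat \<Rightarrow> real) \<Rightarrow> nat \<Rightarrow> real" where
  "rec_prob n D M i x k =
     measure (\<Pi>\<^sub>M j\<in>{..<n}. D j) {V \<in> space (\<Pi>\<^sub>M j\<in>{..<n}. D j). (i,k) \<in> M (V(i := x))}"

text \<open>Candidate selection from a uniform u in [0,1]: item k is selected iff
  sum_{j<k} q j <= u < sum_{j<=k} q j, so with probability q k; no candidate otherwise.\<close>
definition select_cand :: "nat \<Rightarrow> (nat \<Rightarrow> real) \<Rightarrow> real \<Rightarrow> nat option" where
  "select_cand m q u =
     (if \<exists>k<m. sum q {..<k} \<le> u \<and> u < sum q {..<Suc k}
      then Some (LEAST k. k < m \<and> sum q {..<k} \<le> u \<and> u < sum q {..<Suc k})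
      else None)"

text \<open>One buyer's step, given the set S of sold items and current welfare w.
  c = candidate item, t = the buyer's tie coin (uniform in [0,1]; tie broken in favour
  of buying iff t < theta k, i.e. with probability theta k).\<close>
definition buyer_step ::
  "(nat \<Rightarrow> real) \<Rightarrow> (nat \<Rightarrow> real) \<Rightarrow> (nat \<Rightarrow> real) \<Rightarrow> nat option \<Rightarrow> real
     \<Rightarrow> nat set \<times> real \<Rightarrow> nat set \<times> real" where
  "buyer_step \<tau> \<theta> x c t Sw =
     (case c of None \<Rightarrow> Sw
      | Some k \<Rightarrow>
          (if k \<notin> fst Sw \<and> (x k > \<tau> k \<or> (x k = \<tau> k \<and> t < \<theta> k))
           then (insert k (fst Sw), snd Sw + x k) else Sw))"

text \<open>Welfare of the recommendation algorithm for value profile V, arrival times T,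
  candidate-selection randomness U, and tie-breaking randomness W.
  Buyers are processed in increasing order of arrival time (ties, a null event,
  broken by index via the stable sort).\<close>
definition alg_welfare ::
  "nat \<Rightarrow> nat \<Rightarrow> (nat \<Rightarrow> (nat \<Rightarrow> real) measure) \<Rightarrow> ((nat \<Rightarrow> nat \<Rightarrow> real) \<Rightarrow> (nat \<times> nat) set)
     \<Rightarrow> (nat \<Rightarrow> real) \<Rightarrow> (nat \<Rightarrow> real)
     \<Rightarrow> (nat \<Rightarrow> nat \<Rightarrow> real) \<Rightarrow> (nat \<Rightarrow> real) \<Rightarrow> (nat \<Rightarrow> real) \<Rightarrow> (nat \<Rightarrow> real) \<Rightarrow> real" where
  "alg_welfare n m D M \<tau> \<theta> V T U W =
     snd (fold (\<lambda>i. buyer_step \<tau> \<theta> (V i)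
                     (select_cand m (rec_prob n D M i (V i)) (U i)) (W i))
               (sort_key T [0..<n]) ({}, 0))"

definition unif01 :: "real measure" where
  "unif01 = uniform_measure lborel {0..1}"

definition unif_vec :: "nat \<Rightarrow> (nat \<Rightarrow> real) measure" where
  "unif_vec n = (\<Pi>\<^sub>M i\<in>{..<n}. unif01)"

end

theory Submission
  imports Defs
begin

text \<open>
  Choose for every item \<open>k\<close> a price \<open>\<tau> k\<close> and a tie probability \<open>\<theta> k\<close> such that \<open>k\<close> stays
  unsold with probability exactly \<open>1/e\<close> (or at least \<open>1/e\<close> at price \<open>0\<close>); this is possible
  because the probability is monotone and right-continuous in the price, and the tie probability
  interpolates across its jumps. If \<open>a j k\<close> is the probability that buyer \<open>j\<close>, when offered \<open>k\<close>,
  buys it, then \<open>k\<close> is unsold with probability \<open>\<Prod>j. 1 - a j k\<close>, and buyer \<open>i\<close> arriving at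
  time \<open>t\<close> finds \<open>k\<close> not yet taken by an earlier buyer with probability at least
  \<open>\<Prod>j\<noteq>i. 1 - t * a j k \<ge> exp (-t)\<close>.
  Welfare is revenue plus the buyers' utilities: the revenue from \<open>k\<close> is at least
  \<open>(1 - 1/e) * \<tau> k\<close>, and integrating \<open>exp (-t)\<close> over the arrival time shows that the utility of
  buyer \<open>i\<close> from \<open>k\<close> is at least \<open>(1 - 1/e) * E[(v\<^sub>i\<^sub>k - \<tau> k)\<^sup>+ * p\<^sub>k(v\<^sub>i)]\<close>. Finally
  \<open>E[OPT] \<le> \<Sum>k. \<Sum>i. E[v\<^sub>i\<^sub>k * p\<^sub>k(v\<^sub>i)]\<close> and \<open>\<Sum>i. E[p\<^sub>k(v\<^sub>i)] \<le> 1\<close>, so the two bounds add up to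
  \<open>(1 - 1/e) * E[OPT]\<close>.
\<close>

lemma prob_space_unif01: "prob_space unif01"
  unfolding unif01_def by (rule prob_space_uniform_measure) auto

lemma space_unif01 [simp]: "space unif01 = UNIV"
  unfolding unif01_def by simp

lemma sets_unif01 [simp, measurable_cong]: "sets unif01 = sets borel"
  unfolding unif01_def by simp

lemma emeasure_unif01_UNIV [simp]: "emeasure unif01 UNIV = 1"
  using prob_space.emeasure_space_1[OF prob_space_unif01] by simp

lemma AE_unif01_in_unit: "AE t in unif01. 0 \<le> t \<and> t \<le> 1"
  unfolding unif01_def by (rule AE_uniform_measureI) auto

lemma measure_unif01: "B \<in> sets borel \<Longrightarrow> measure unif01 B = measure lborel ({0..1} \<inter> B)"
  unfolding unif01_def by (subst measure_uniform_measure) auto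

lemma measure_unif01_atLeastLessThan:
  assumes "0 \<le> a" "a \<le> b" "b \<le> 1"
  shows "measure unif01 {a..<b} = b - a"
proof -
  have "{0..1} \<inter> {a..<b} = {a..<b}" using assms by auto
  then show ?thesis using assms by (subst measure_unif01) (auto simp: measure_def)
qed

lemma measure_unif01_less:
  assumes "0 \<le> a" "a \<le> 1"
  shows "measure unif01 {w. w < a} = a"
proof -
  have "{0..1} \<inter> {w. w < a} = {0..<a}" using assms by auto
  then show ?thesis using assms by (subst measure_unif01) (auto simp: measure_def)
qed

lemma measure_unif01_le:
  assumes "0 \<le> a" "a \<le> 1"
  shows "measure unif01 {w. w \<le> a} = a"
proof -
  have "{0..1} \<inter> {w. w \<le> a} = {0..a}" using assms by auto
  then show ?thesis using assms by (subst measure_unif01) (auto simp: measure_def)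
qed

lemma nn_integral_exp_neg_unif01: "(\<integral>\<^sup>+t. ennreal (exp (-t)) \<partial>unif01) = ennreal (1 - exp (-1))"
proof -
  have "((\<lambda>t. exp (-t)) has_integral (- exp (-1) - (- exp (-0)))) {0..1::real}"
    by (rule fundamental_theorem_of_calculus)
       (auto intro!: derivative_eq_intros simp flip: has_real_derivative_iff_has_vector_derivative)
  then have "(\<integral>\<^sup>+t. ennreal (exp (-t)) * indicator {0..1} t \<partial>lborel) = ennreal (1 - exp (-1))"
    by (intro nn_integral_has_integral_lebesgue') auto
  then show ?thesis
    unfolding unif01_def by (subst nn_integral_uniform_measure) (auto simp: divide_ennreal_def)
qed

lemma prob_space_unif_vec: "prob_space (unif_vec n)"
  unfolding unif_vec_def by (rule prob_space_PiM) (rule prob_space_unif01)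

lemma measurable_unif_vec_component:
  "j < n \<Longrightarrow> (\<lambda>T. T j) \<in> borel_measurable (unif_vec n)"
  unfolding unif_vec_def
  by (subst measurable_cong_sets[OF refl sets_unif01[symmetric]]) (rule measurable_component_singleton, simp)

lemma (in prob_space) nn_integral_If_set:
  assumes "A \<in> events" "0 \<le> x" "0 \<le> y"
  shows "(\<integral>\<^sup>+u. ennreal (if u \<in> A then x else y) \<partial>M) = ennreal (prob A * x + (1 - prob A) * y)"
proof -
  have "(\<integral>\<^sup>+u. ennreal (if u \<in> A then x else y) \<partial>M)
      = (\<integral>\<^sup>+u. ennreal x * indicator A u + ennreal y * indicator (space M - A) u \<partial>M)"
    by (rule nn_integral_cong) (auto split: split_indicator)
  also have "\<dots> = ennreal x * emeasure M A + ennreal y * emeasure M (space M - A)"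
    using assms by (subst nn_integral_add) (auto simp: nn_integral_cmult)
  also have "\<dots> = ennreal (prob A * x + (1 - prob A) * y)"
    using assms by (simp add: emeasure_eq_measure prob_compl ennreal_mult'[symmetric]
        ennreal_plus[symmetric] mult.commute del: ennreal_plus)
  finally show ?thesis .
qed

lemma (in prob_space) nn_integral_one_minus:
  assumes "f \<in> borel_measurable M" "\<And>x. 0 \<le> f x" "\<And>x. f x \<le> 1"
    and "(\<integral>\<^sup>+x. ennreal (f x) \<partial>M) = ennreal r" "0 \<le> r"
  shows "(\<integral>\<^sup>+x. ennreal (1 - f x) \<partial>M) = ennreal (1 - r)"
proof -
  have "(\<integral>\<^sup>+x. ennreal (1 - f x) \<partial>M) + ennreal r = (\<integral>\<^sup>+x. ennreal (1 - f x) + ennreal (f x) \<partial>M)"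
    using assms by (subst nn_integral_add) auto
  also have "\<dots> = (\<integral>\<^sup>+x. 1 \<partial>M)"
    using assms by (intro nn_integral_cong) (simp add: ennreal_plus[symmetric] del: ennreal_plus)
  finally have sum: "(\<integral>\<^sup>+x. ennreal (1 - f x) \<partial>M) + ennreal r = 1"
    by (simp add: emeasure_space_1)
  then have "(\<integral>\<^sup>+x. ennreal (1 - f x) \<partial>M) = 1 - ennreal r"
    by (metis ennreal_add_diff_cancel_right ennreal_neq_top)
  then show ?thesis
    using \<open>0 \<le> r\<close> by (simp add: ennreal_minus ennreal_1[symmetric] del: ennreal_1)
qed

lemma nn_integral_arrival_before:
  assumes "0 \<le> t" "t \<le> 1" "0 \<le> b" "b \<le> 1"
  shows "(\<integral>\<^sup>+s. ennreal (1 - of_bool (s \<le> t) * b) \<partial>unif01) = ennreal (1 - t * b)"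
proof -
  interpret prob_space unif01 by (rule prob_space_unif01)
  have "(\<integral>\<^sup>+s. ennreal (1 - of_bool (s \<le> t) * b) \<partial>unif01)
      = (\<integral>\<^sup>+s. ennreal (if s \<in> {s. s \<le> t} then 1 - b else 1) \<partial>unif01)"
    by (intro nn_integral_cong) auto
  also have "\<dots> = ennreal (t * (1 - b) + (1 - t) * 1)"
    using assms measure_unif01_le[of t] by (subst nn_integral_If_set) auto
  finally show ?thesis by (simp add: algebra_simps)
qed

lemma product_prob_space_restrict:
  assumes "\<And>j. j \<in> I \<Longrightarrow> prob_space (N j)"
  shows "product_prob_space (\<lambda>j. if j \<in> I then N j else count_space {undefined})"
  by (rule product_prob_spaceI) (use assms in \<open>auto intro: prob_spaceI\<close>)

lemma nn_integral_PiM_prod: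
  assumes "\<And>j. j \<in> I \<Longrightarrow> prob_space (N j)" "finite I"
    and "\<And>j. j \<in> I \<Longrightarrow> g j \<in> borel_measurable (N j)"
  shows "(\<integral>\<^sup>+x. (\<Prod>j\<in>I. g j (x j)) \<partial>PiM I N) = (\<Prod>j\<in>I. \<integral>\<^sup>+x. g j x \<partial>N j)"
proof -
  let ?N = "\<lambda>j. if j \<in> I then N j else count_space {undefined}"
  interpret product_prob_space ?N I by (rule product_prob_space_restrict) (use assms in auto)
  have "PiM I ?N = PiM I N" by (rule PiM_cong) auto
  moreover have "(\<integral>\<^sup>+x. (\<Prod>j\<in>I. g j (x j)) \<partial>PiM I ?N) = (\<Prod>j\<in>I. \<integral>\<^sup>+x. g j x \<partial>?N j)"
    using assms by (intro product_nn_integral_prod) auto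
  ultimately show ?thesis by simp
qed

lemma nn_integral_PiM_remove:
  assumes "\<And>j. j \<in> I \<Longrightarrow> prob_space (N j)" "finite I" "i \<in> I"
    and "f \<in> borel_measurable (PiM I N)"
  shows "(\<integral>\<^sup>+x. f x \<partial>PiM I N) = (\<integral>\<^sup>+y. (\<integral>\<^sup>+x. f (x(i := y)) \<partial>PiM (I - {i}) N) \<partial>N i)"
proof -
  let ?N = "\<lambda>j. if j \<in> I then N j else count_space {undefined}"
  interpret product_prob_space ?N I by (rule product_prob_space_restrict) (use assms in auto)
  have I: "insert i (I - {i}) = I" using assms by auto
  have "PiM (insert i (I - {i})) ?N = PiM I N" unfolding I by (rule PiM_cong) auto
  moreover have "PiM (I - {i}) ?N = PiM (I - {i}) N" by (rule PiM_cong) auto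
  moreover note product_nn_integral_insert_rev[of "I - {i}" i f]
  ultimately show ?thesis using assms by simp
qed

lemma borel_measurable_PiM_prod:
  fixes g :: "'i \<Rightarrow> 'a \<Rightarrow> real"
  assumes "\<And>j. j \<in> I \<Longrightarrow> g j \<in> borel_measurable (N j)"
  shows "(\<lambda>x. \<Prod>j\<in>I. g j (x j)) \<in> borel_measurable (PiM I N)"
  using assms by (intro borel_measurable_prod) (simp add: measurable_component_singleton measurable_compose)

lemma nn_integral_PiM_prod_real:
  fixes g :: "'i \<Rightarrow> 'a \<Rightarrow> real"
  assumes "\<And>j. j \<in> I \<Longrightarrow> prob_space (N j)" "finite I"
    and "\<And>j. j \<in> I \<Longrightarrow> g j \<in> borel_measurable (N j)" "\<And>j x. j \<in> I \<Longrightarrow> 0 \<le> g j x"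
    and "\<And>j. j \<in> I \<Longrightarrow> (\<integral>\<^sup>+x. ennreal (g j x) \<partial>N j) = ennreal (r j)" "\<And>j. j \<in> I \<Longrightarrow> 0 \<le> r j"
  shows "(\<integral>\<^sup>+x. ennreal (\<Prod>j\<in>I. g j (x j)) \<partial>PiM I N) = ennreal (\<Prod>j\<in>I. r j)"
proof -
  have "(\<integral>\<^sup>+x. ennreal (\<Prod>j\<in>I. g j (x j)) \<partial>PiM I N) = (\<integral>\<^sup>+x. (\<Prod>j\<in>I. ennreal (g j (x j))) \<partial>PiM I N)"
    using assms by (intro nn_integral_cong) (simp add: prod_ennreal)
  also have "\<dots> = (\<Prod>j\<in>I. ennreal (r j))"
    using assms by (subst nn_integral_PiM_prod) auto
  finally show ?thesis using assms by (simp add: prod_ennreal)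
qed

lemma nn_integral_PiM_one_minus_prod:
  fixes g :: "'i \<Rightarrow> 'a \<Rightarrow> real"
  assumes "\<And>j. j \<in> I \<Longrightarrow> prob_space (N j)" "finite I"
    and "\<And>j. j \<in> I \<Longrightarrow> g j \<in> borel_measurable (N j)" "\<And>j x. j \<in> I \<Longrightarrow> 0 \<le> g j x \<and> g j x \<le> 1"
    and "\<And>j. j \<in> I \<Longrightarrow> (\<integral>\<^sup>+x. ennreal (g j x) \<partial>N j) = ennreal (r j)" "\<And>j. j \<in> I \<Longrightarrow> 0 \<le> r j"
  shows "(\<integral>\<^sup>+x. ennreal (1 - (\<Prod>j\<in>I. g j (x j))) \<partial>PiM I N) = ennreal (1 - (\<Prod>j\<in>I. r j))"
proof -
  interpret prob_space "PiM I N" by (rule prob_space_PiM) (use assms in auto)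
  show ?thesis
    using assms by (intro nn_integral_one_minus borel_measurable_PiM_prod nn_integral_PiM_prod_real
        prod_nonneg prod_le_1) auto
qed

lemma ennreal_sum_le_sum_ennreal: "ennreal (sum f A) \<le> (\<Sum>a\<in>A. ennreal (f a))"
proof (induction A rule: infinite_finite_induct)
  case (insert x F)
  have "ennreal (f x + sum f F) \<le> ennreal (max 0 (f x) + max 0 (sum f F))"
    by (rule ennreal_leI) simp
  also have "\<dots> = ennreal (f x) + ennreal (sum f F)"
    by (simp add: ennreal_plus[symmetric] max_def ennreal_neg del: ennreal_plus)
  also have "\<dots> \<le> ennreal (f x) + (\<Sum>a\<in>F. ennreal (f a))"
    using insert by (intro add_left_mono) auto
  finally show ?case using insert by simp
qed auto

lemma nn_integral_lincomb_plus_double_sum: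
  fixes f :: "'k \<Rightarrow> 'a \<Rightarrow> ennreal" and g :: "'k \<Rightarrow> 'i \<Rightarrow> 'a \<Rightarrow> ennreal"
  assumes "\<And>k. k \<in> K \<Longrightarrow> f k \<in> borel_measurable M"
    and "\<And>k i. k \<in> K \<Longrightarrow> i \<in> I \<Longrightarrow> g k i \<in> borel_measurable M"
  shows "(\<integral>\<^sup>+x. (\<Sum>k\<in>K. c k * f k x) + (\<Sum>k\<in>K. \<Sum>i\<in>I. g k i x) \<partial>M)
    = (\<Sum>k\<in>K. c k * integral\<^sup>N M (f k)) + (\<Sum>k\<in>K. \<Sum>i\<in>I. integral\<^sup>N M (g k i))"
  using assms by (simp add: nn_integral_add nn_integral_sum nn_integral_cmult borel_measurable_sum)

lemma prod_of_bool: "finite A \<Longrightarrow> (\<Prod>j\<in>A. of_bool (P j) :: 'a::comm_semiring_1) = of_bool (\<forall>j\<in>A. P j)"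
  by (induction A rule: finite_induct) auto

lemma exp_neg_le_prod_one_minus:
  fixes a :: "'j \<Rightarrow> real"
  assumes J: "finite J" and a: "\<And>j. j \<in> J \<Longrightarrow> 0 \<le> a j \<and> a j \<le> 1"
    and e: "exp (-1) \<le> (\<Prod>j\<in>J. 1 - a j)" and t: "0 \<le> t" "t \<le> 1"
  shows "exp (-t) \<le> (\<Prod>j\<in>J. 1 - t * a j)"
proof -
  have a_less: "a j < 1" if "j \<in> J" for j
  proof (rule ccontr)
    assume "\<not> a j < 1"
    then have "a j = 1" using a[OF that] by simp
    then have "(\<Prod>j\<in>J. 1 - a j) = 0" using that J by (intro prod_zero) auto
    then show False using e by (simp add: not_le[symmetric])
  qed
  have "exp (-t) = exp (-1) powr t" by (simp add: powr_def)
  also have "\<dots> \<le> (\<Prod>j\<in>J. 1 - a j) powr t" using t e by (intro powr_mono2) auto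
  also have "\<dots> = (\<Prod>j\<in>J. (1 - a j) powr t)" by (rule prod_powr_distrib)
  also have "\<dots> \<le> (\<Prod>j\<in>J. 1 - t * a j)"
  proof (rule prod_mono)
    fix j assume j: "j \<in> J"
    \<comment> \<open>concavity of \<open>x powr t\<close> in the form of convexity of \<open>exp\<close>\<close>
    have "exp ((1 - t) *\<^sub>R 0 + t *\<^sub>R ln (1 - a j)) \<le> (1 - t) * exp 0 + t * exp (ln (1 - a j))"
      using t by (intro convex_onD[OF exp_convex]) auto
    then show "0 \<le> (1 - a j) powr t \<and> (1 - a j) powr t \<le> 1 - t * a j"
      using a_less[OF j] by (simp add: powr_def algebra_simps)
  qed
  finally show ?thesis .
qed

lemma nn_integral_unif01_prod_ge:
  fixes a :: "'j \<Rightarrow> real"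
  assumes "finite J" "\<And>j. j \<in> J \<Longrightarrow> 0 \<le> a j \<and> a j \<le> 1" "exp (-1) \<le> (\<Prod>j\<in>J. 1 - a j)"
  shows "ennreal (1 - exp (-1)) * c \<le> (\<integral>\<^sup>+t. c * ennreal (\<Prod>j\<in>J. 1 - t * a j) \<partial>unif01)"
proof -
  have "ennreal (1 - exp (-1)) * c = (\<integral>\<^sup>+t. c * ennreal (exp (-t)) \<partial>unif01)"
    by (simp add: nn_integral_cmult nn_integral_exp_neg_unif01 mult.commute)
  also have "\<dots> \<le> (\<integral>\<^sup>+t. c * ennreal (\<Prod>j\<in>J. 1 - t * a j) \<partial>unif01)"
  proof (rule nn_integral_mono_AE)
    show "AE t in unif01. c * ennreal (exp (-t)) \<le> c * ennreal (\<Prod>j\<in>J. 1 - t * a j)"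
      using AE_unif01_in_unit
      by eventually_elim (use assms in \<open>auto intro!: mult_left_mono ennreal_leI exp_neg_le_prod_one_minus\<close>)
  qed
  finally show ?thesis .
qed

lemma tendsto_step_right:
  "(\<lambda>N. if y + inverse (real (Suc N)) < x then 1 else 0 :: real) \<longlonglongrightarrow> (if y < x then 1 else 0)"
proof (cases "y < x")
  case True
  then have "eventually (\<lambda>N. y + inverse (real (Suc N)) < x) sequentially"
    by (intro order_tendstoD(2)[OF LIMSEQ_inverse_real_of_nat_add])
  then show ?thesis using True by (auto intro: tendsto_eventually elim: eventually_mono)
next
  case False
  have "\<not> y + inverse (real (Suc N)) < x" for N
    using False by (smt (verit) inverse_positive_iff_positive of_nat_0_less_iff zero_less_Suc)
  then show ?thesis using False by simp
qed

lemma tendsto_step_left: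
  "(\<lambda>N. if y - inverse (real (Suc N)) < x then 1 else 0 :: real) \<longlonglongrightarrow> (if y \<le> x then 1 else 0)"
proof (cases "y \<le> x")
  case True
  have "y - inverse (real (Suc N)) < x" for N
    using True by (smt (verit) inverse_positive_iff_positive of_nat_0_less_iff zero_less_Suc)
  then show ?thesis using True by simp
next
  case False
  then have "eventually (\<lambda>N. x < y + - inverse (real (Suc N))) sequentially"
    by (intro order_tendstoD(1)[OF LIMSEQ_inverse_real_of_nat_add_minus]) simp
  then have "eventually (\<lambda>N. (if y - inverse (real (Suc N)) < x then 1 else 0 :: real) = 0) sequentially"
    by (rule eventually_mono) auto
  then show ?thesis using False by (simp add: tendsto_eventually)
qed

lemma tendsto_step_at_top: "(\<lambda>N. if real N < x then 1 else 0 :: real) \<longlonglongrightarrow> 0"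
proof -
  obtain N0 :: nat where "x \<le> real N0" using real_arch_simple by blast
  then have "eventually (\<lambda>N. \<not> real N < x) sequentially"
    unfolding eventually_sequentially by (intro exI[of _ N0]) auto
  then show ?thesis by (auto intro: tendsto_eventually elim: eventually_mono)
qed

lemma threshold_crossing:
  fixes F G :: "real \<Rightarrow> real"
  assumes mono: "mono F"
    and right: "\<And>y. (\<lambda>N. F (y + inverse (real (Suc N)))) \<longlonglongrightarrow> F y"
    and left: "\<And>y. (\<lambda>N. F (y - inverse (real (Suc N)))) \<longlonglongrightarrow> G y"
    and top: "(\<lambda>N. F (real N)) \<longlonglongrightarrow> L" and c: "c < L"
  shows "\<exists>y\<ge>0. c \<le> F y \<and> (y = 0 \<or> G y \<le> c)"
proof -
  define S where "S = {y. 0 \<le> y \<and> c \<le> F y}"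
  obtain N0 where "c < F (real N0)"
    using order_tendstoD(1)[OF top c] unfolding eventually_sequentially by auto
  then have "real N0 \<in> S" unfolding S_def by simp
  moreover have "bdd_below S" unfolding S_def by (rule bdd_belowI[of _ 0]) auto
  ultimately have S: "S \<noteq> {}" "bdd_below S" by auto
  define y0 where "y0 = Inf S"
  have y0: "0 \<le> y0" unfolding y0_def S_def using S by (intro cInf_greatest) (auto simp: S_def)
  have "c \<le> F y0"
  proof (rule LIMSEQ_le_const[OF right], intro exI allI impI)
    fix N :: nat
    obtain s where "s \<in> S" "s < y0 + inverse (real (Suc N))"
      using cInf_less_iff[OF S] unfolding y0_def[symmetric] by (metis inverse_positive_iff_positive
          less_add_same_cancel1 of_nat_0_less_iff zero_less_Suc)
    then show "c \<le> F (y0 + inverse (real (Suc N)))"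
      using mono unfolding S_def by (auto dest!: monoD[of F, OF mono, OF less_imp_le])
  qed
  moreover have "G y0 \<le> c" if y0_pos: "0 < y0"
  proof (rule LIMSEQ_le_const2[OF left])
    obtain N1 where N1: "inverse (real (Suc N1)) < y0" using reals_Archimedean[OF y0_pos] by auto
    show "\<exists>N1. \<forall>N\<ge>N1. F (y0 - inverse (real (Suc N))) \<le> c"
    proof (intro exI allI impI)
      fix N assume "N1 \<le> N"
      then have "inverse (real (Suc N)) \<le> inverse (real (Suc N1))"
        by (simp add: le_imp_inverse_le)
      then have "0 \<le> y0 - inverse (real (Suc N))" using N1 by linarith
      moreover have "y0 - inverse (real (Suc N)) \<notin> S"
        using cInf_lower[OF _ S(2), of "y0 - inverse (real (Suc N))"] unfolding y0_def[symmetric] by auto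
      ultimately show "F (y0 - inverse (real (Suc N))) \<le> c" unfolding S_def by auto
    qed
  qed
  ultimately show ?thesis using y0 by force
qed

lemma exists_tie_breaking_threshold:
  fixes A B :: "'j \<Rightarrow> real \<Rightarrow> real"
  assumes bounds: "\<And>j y. j \<in> J \<Longrightarrow> 0 \<le> A j y \<and> A j y \<le> B j y \<and> B j y \<le> 1"
    and antimono: "\<And>j y y'. j \<in> J \<Longrightarrow> y \<le> y' \<Longrightarrow> A j y' \<le> A j y"
    and right: "\<And>j y. j \<in> J \<Longrightarrow> (\<lambda>N. A j (y + inverse (real (Suc N)))) \<longlonglongrightarrow> A j y"
    and left: "\<And>j y. j \<in> J \<Longrightarrow> (\<lambda>N. A j (y - inverse (real (Suc N)))) \<longlonglongrightarrow> B j y"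
    and top: "\<And>j. j \<in> J \<Longrightarrow> (\<lambda>N. A j (real N)) \<longlonglongrightarrow> 0"
  shows "\<exists>y \<theta>. 0 \<le> y \<and> 0 \<le> \<theta> \<and> \<theta> \<le> 1 \<and>
    exp (-1) \<le> (\<Prod>j\<in>J. 1 - (A j y + \<theta> * (B j y - A j y))) \<and>
    (y = 0 \<or> (\<Prod>j\<in>J. 1 - (A j y + \<theta> * (B j y - A j y))) \<le> exp (-1))"
proof -
  define H where "H y \<theta> = (\<Prod>j\<in>J. 1 - (A j y + \<theta> * (B j y - A j y)))" for y \<theta>
  have "mono (\<lambda>y. H y 0)"
    unfolding H_def
  proof (intro monoI prod_mono conjI)
    fix x y :: real and j assume "x \<le> y" "j \<in> J"
    then show "0 \<le> 1 - (A j x + 0 * (B j x - A j x))"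
      and "1 - (A j x + 0 * (B j x - A j x)) \<le> 1 - (A j y + 0 * (B j y - A j y))"
      using bounds[of j x] antimono[of j x y] by auto
  qed
  moreover have H0: "H y 0 = (\<Prod>j\<in>J. 1 - A j y)" and H1: "H y 1 = (\<Prod>j\<in>J. 1 - B j y)" for y
    unfolding H_def by simp_all
  moreover have "(\<lambda>N. (\<Prod>j\<in>J. 1 - A j (real N))) \<longlonglongrightarrow> (\<Prod>j\<in>J. 1 - 0)"
    by (intro tendsto_prod tendsto_diff tendsto_const top)
  moreover have "(\<lambda>N. (\<Prod>j\<in>J. 1 - A j (y + inverse (real (Suc N))))) \<longlonglongrightarrow> (\<Prod>j\<in>J. 1 - A j y)" for y
    by (intro tendsto_prod tendsto_diff tendsto_const right)
  moreover have "(\<lambda>N. (\<Prod>j\<in>J. 1 - A j (y - inverse (real (Suc N))))) \<longlonglongrightarrow> (\<Prod>j\<in>J. 1 - B j y)" for y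
    by (intro tendsto_prod tendsto_diff tendsto_const left)
  ultimately obtain y where y: "0 \<le> y" "exp (-1) \<le> H y 0" "y = 0 \<or> H y 1 \<le> exp (-1)"
    using threshold_crossing[of "\<lambda>y. H y 0" "\<lambda>y. H y 1" 1 "exp (-1)"] by auto
  show ?thesis
  proof (cases "H y 1 \<le> exp (-1)")
    case True
    have "continuous_on {0..1} (H y)" unfolding H_def by (intro continuous_intros)
    then obtain \<theta> where "0 \<le> \<theta>" "\<theta> \<le> 1" "H y \<theta> = exp (-1)"
      using IVT2'[of "H y" 1 "exp (-1)" 0] y True by auto
    then show ?thesis using y unfolding H_def by (intro exI[of _ y] exI[of _ \<theta>]) auto
  next
    case False
    then show ?thesis using y unfolding H_def by (intro exI[of _ y] exI[of _ 1]) auto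
  qed
qed

lemma select_cand_less: "select_cand m q u = Some k \<Longrightarrow> k < m"
  unfolding select_cand_def by (metis (mono_tags, lifting) LeastI option.distinct(1) option.inject)

lemma select_cand_eq_Some_iff:
  assumes "\<And>j. 0 \<le> q j"
  shows "select_cand m q u = Some k \<longleftrightarrow> k < m \<and> sum q {..<k} \<le> u \<and> u < sum q {..<Suc k}"
proof -
  have unique: "k1 = k2" if "sum q {..<k1} \<le> u" "u < sum q {..<Suc k1}"
      "sum q {..<k2} \<le> u" "u < sum q {..<Suc k2}" for k1 k2
  proof -
    have "sum q {..<Suc k} \<le> sum q {..<k'}" if "k < k'" for k k'
      using that assms by (intro sum_mono2) auto
    then show ?thesis using that by (metis linorder_neqE_nat not_less order.strict_trans1)
  qed
  show ?thesis
  proof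
    assume "select_cand m q u = Some k"
    then show "k < m \<and> sum q {..<k} \<le> u \<and> u < sum q {..<Suc k}"
      unfolding select_cand_def by (metis (mono_tags, lifting) LeastI option.distinct(1) option.inject)
  next
    assume k: "k < m \<and> sum q {..<k} \<le> u \<and> u < sum q {..<Suc k}"
    then have "(LEAST k. k < m \<and> sum q {..<k} \<le> u \<and> u < sum q {..<Suc k}) = k"
      using unique by (intro Least_equality) auto
    then show "select_cand m q u = Some k" using k unfolding select_cand_def by auto
  qed
qed

lemma sets_select_cand [measurable]: "{u. select_cand m q u = Some k} \<in> sets borel"
  unfolding select_cand_def by (simp add: Measurable.pred_def[symmetric]) measurable

lemma measurable_select_cand [measurable]: "select_cand m q \<in> measurable borel (count_space UNIV)"
proof (subst measurable_count_space_eq2_countable, safe)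
  fix c :: "nat option"
  show "select_cand m q -` {c} \<inter> space borel \<in> sets borel"
  proof (cases c)
    case None
    have "select_cand m q u = None \<longleftrightarrow> (\<forall>k<m. select_cand m q u \<noteq> Some k)" for u
      using select_cand_less[of m q u] by (cases "select_cand m q u") auto
    then have "select_cand m q -` {None} \<inter> space borel = - (\<Union>k<m. {u. select_cand m q u = Some k})"
      by auto
    also have "\<dots> \<in> sets borel"
      by (intro borel_comp sets.finite_UN) auto
    finally show ?thesis using None by simp
  next
    case (Some k)
    then show ?thesis by (simp add: vimage_def)
  qed
qed auto

context
  fixes m :: nat and q :: "nat \<Rightarrow> real"
  assumes q_nonneg: "\<And>j. 0 \<le> q j" and sum_q_le_1: "sum q {..<m} \<le> 1"
begin

lemma measure_select_cand: "k < m \<Longrightarrow> measure unif01 {u. select_cand m q u = Some k} = q k"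
proof -
  assume k: "k < m"
  have "{u. select_cand m q u = Some k} = {sum q {..<k}..<sum q {..<Suc k}}"
    using k by (auto simp: select_cand_eq_Some_iff[OF q_nonneg])
  moreover have "sum q {..<Suc k} \<le> sum q {..<m}" using k q_nonneg by (intro sum_mono2) auto
  ultimately show ?thesis
    using sum_q_le_1 q_nonneg by (simp add: measure_unif01_atLeastLessThan sum_nonneg)
qed

lemma nn_integral_select_cand_If:
  assumes "k < m" "0 \<le> x" "0 \<le> y"
  shows "(\<integral>\<^sup>+u. ennreal (if select_cand m q u = Some k then x else y) \<partial>unif01)
    = ennreal (q k * x + (1 - q k) * y)"
proof -
  interpret prob_space unif01 by (rule prob_space_unif01)
  have "(\<integral>\<^sup>+u. ennreal (if u \<in> {u. select_cand m q u = Some k} then x else y) \<partial>unif01)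
      = ennreal (prob {u. select_cand m q u = Some k} * x + (1 - prob {u. select_cand m q u = Some k}) * y)"
    using assms by (intro nn_integral_If_set) auto
  then show ?thesis using assms by (simp add: measure_select_cand)
qed

end

locale sequential_offers =
  fixes m :: nat and cand :: "nat \<Rightarrow> nat option" and buys :: "nat \<Rightarrow> nat \<Rightarrow> bool"
    and val :: "nat \<Rightarrow> nat \<Rightarrow> real" and price :: "nat \<Rightarrow> real" and T :: "nat \<Rightarrow> real"
  assumes cand_less: "cand i = Some k \<Longrightarrow> k < m"
    and price_le_val: "buys i k \<Longrightarrow> price k \<le> val i k"
    and price_nonneg: "0 \<le> price k"
begin

definition offer_step :: "nat \<Rightarrow> nat set \<times> real \<Rightarrow> nat set \<times> real" where
  "offer_step i Sw = (case cand i of None \<Rightarrow> Sw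
     | Some k \<Rightarrow> if k \<notin> fst Sw \<and> buys i k then (insert k (fst Sw), snd Sw + val i k) else Sw)"

definition revenue_lb :: "nat set \<Rightarrow> nat set \<Rightarrow> real" where
  "revenue_lb S A = (\<Sum>k<m. if k \<notin> S \<and> (\<exists>j\<in>A. cand j = Some k \<and> buys j k) then price k else 0)"

definition utility_lb :: "nat set \<Rightarrow> nat set \<Rightarrow> nat \<Rightarrow> real" where
  "utility_lb S A i = (\<Sum>k<m. if k \<notin> S \<and> cand i = Some k \<and> buys i k \<and>
     (\<forall>j\<in>A. j \<noteq> i \<and> T j \<le> T i \<longrightarrow> \<not> (cand j = Some k \<and> buys j k)) then val i k - price k else 0)"

text \<open>The buyers \<open>A\<close> still to arrive (in the order of \<open>T\<close>) contribute at least
  \<open>revenue_lb + utility_lb\<close>: an unsold item that one of them would buy is eventually sold at its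
  price, and a buyer who is the first to want his candidate item gets it.\<close>

definition welfare_lb :: "nat set \<times> real \<Rightarrow> nat set \<Rightarrow> real" where
  "welfare_lb Sw A = snd Sw + revenue_lb (fst Sw) A + (\<Sum>i\<in>A. utility_lb (fst Sw) A i)"

lemma utility_lb_antimono:
  assumes "S' \<subseteq> S" "A' \<subseteq> A"
  shows "utility_lb S A i \<le> utility_lb S' A' i"
  unfolding utility_lb_def using assms by (intro sum_mono) (auto dest: price_le_val)

lemma welfare_lb_offer_step:
  assumes x: "x \<notin> A" "\<And>j. j \<in> A \<Longrightarrow> T x \<le> T j" and A: "finite A"
  shows "welfare_lb Sw (insert x A) \<le> welfare_lb (offer_step x Sw) A"
proof (cases "\<exists>k. cand x = Some k \<and> k \<notin> fst Sw \<and> buys x k")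
  case True
  then obtain k0 where k0: "cand x = Some k0" "k0 \<notin> fst Sw" "buys x k0" by blast
  let ?S = "fst Sw" and ?S' = "insert k0 (fst Sw)"
  have step: "offer_step x Sw = (?S', snd Sw + val x k0)"
    using k0 by (simp add: offer_step_def)
  have "revenue_lb ?S (insert x A) \<le> (\<Sum>k<m. (if k = k0 then price k0 else 0)
      + (if k \<notin> ?S' \<and> (\<exists>j\<in>A. cand j = Some k \<and> buys j k) then price k else 0))"
    unfolding revenue_lb_def using k0 price_nonneg by (intro sum_mono) auto
  also have "\<dots> = price k0 + revenue_lb ?S' A"
    unfolding revenue_lb_def sum.distrib using cand_less[OF k0(1)] by simp
  finally have revenue: "revenue_lb ?S (insert x A) \<le> price k0 + revenue_lb ?S' A" .
  have "utility_lb ?S (insert x A) x \<le> (\<Sum>k<m. if k = k0 then val x k0 - price k0 else 0)"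
    unfolding utility_lb_def using k0 price_le_val[OF k0(3)] by (intro sum_mono) auto
  then have utility_x: "utility_lb ?S (insert x A) x \<le> val x k0 - price k0"
    using cand_less[OF k0(1)] by simp
  have utility_A: "utility_lb ?S (insert x A) i \<le> utility_lb ?S' A i" if "i \<in> A" for i
    unfolding utility_lb_def using k0 x that by (intro sum_mono) (auto dest: price_le_val)
  have "(\<Sum>i\<in>insert x A. utility_lb ?S (insert x A) i) \<le> (val x k0 - price k0) + (\<Sum>i\<in>A. utility_lb ?S' A i)"
    using x A utility_x utility_A by (simp add: add_mono sum_mono)
  then show ?thesis
    unfolding welfare_lb_def step using revenue by simp
next
  case False
  then have step: "offer_step x Sw = Sw"
    by (auto simp: offer_step_def split: option.split)
  have "revenue_lb (fst Sw) (insert x A) = revenue_lb (fst Sw) A"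
    unfolding revenue_lb_def using False by (intro sum.cong) auto
  moreover have "utility_lb (fst Sw) (insert x A) x = 0"
    unfolding utility_lb_def using False by (intro sum.neutral) auto
  moreover have "(\<Sum>i\<in>A. utility_lb (fst Sw) (insert x A) i) \<le> (\<Sum>i\<in>A. utility_lb (fst Sw) A i)"
    by (intro sum_mono utility_lb_antimono) auto
  ultimately show ?thesis
    unfolding welfare_lb_def step using x A by simp
qed

lemma welfare_lb_le_fold:
  assumes "distinct xs" "sorted (map T xs)"
  shows "welfare_lb Sw (set xs) \<le> snd (fold offer_step xs Sw)"
  using assms
proof (induction xs arbitrary: Sw)
  case Nil
  then show ?case by (simp add: welfare_lb_def revenue_lb_def)
next
  case (Cons x xs)
  have "welfare_lb Sw (set (x # xs)) = welfare_lb Sw (insert x (set xs))" by simp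
  also have "\<dots> \<le> welfare_lb (offer_step x Sw) (set xs)"
    using Cons.prems by (intro welfare_lb_offer_step) auto
  also have "\<dots> \<le> snd (fold offer_step (x # xs) Sw)"
    using Cons by simp
  finally show ?case .
qed

end

locale prophet_secretary =
  fixes n m :: nat
    and D :: "nat \<Rightarrow> (nat \<Rightarrow> real) measure"
    and M :: "(nat \<Rightarrow> nat \<Rightarrow> real) \<Rightarrow> (nat \<times> nat) set"
  assumes D_prob: "\<And>i. i < n \<Longrightarrow> prob_space (D i)"
    and D_sets: "\<And>i. i < n \<Longrightarrow> sets (D i) = sets (value_space m)"
    and M_matching: "\<And>V. is_matching n m (M V)"
    and M_meas: "\<And>i k. {V \<in> space (profile_space n m). (i, k) \<in> M V} \<in> sets (profile_space n m)"
begin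

abbreviation P :: "(nat \<Rightarrow> nat \<Rightarrow> real) measure" where
  "P \<equiv> \<Pi>\<^sub>M i\<in>{..<n}. D i"

abbreviation p :: "nat \<Rightarrow> (nat \<Rightarrow> real) \<Rightarrow> nat \<Rightarrow> real" where
  "p \<equiv> rec_prob n D M"

lemma prob_space_P: "prob_space P"
  by (rule prob_space_PiM) (rule D_prob, simp)

lemma sets_P: "sets P = sets (profile_space n m)"
  unfolding profile_space_def by (rule sets_PiM_cong) (simp_all add: D_sets)

lemma space_P: "space P = space (profile_space n m)"
  using sets_P by (rule sets_eq_imp_space_eq)

lemma space_D: "i < n \<Longrightarrow> space (D i) = space (value_space m)"
  using D_sets by (rule sets_eq_imp_space_eq)

lemma matched_sets: "{V \<in> space P. (i, k) \<in> M V} \<in> sets P"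
  using M_meas by (simp add: sets_P space_P)

lemma M_item_unique: "(i, k) \<in> M V \<Longrightarrow> (i, k') \<in> M V \<Longrightarrow> k = k'"
  using M_matching unfolding is_matching_def by fastforce

lemma M_buyer_unique: "(i, k) \<in> M V \<Longrightarrow> (i', k) \<in> M V \<Longrightarrow> i = i'"
  using M_matching unfolding is_matching_def by fastforce

lemma measurable_component_value:
  "i < n \<Longrightarrow> k < m \<Longrightarrow> (\<lambda>v. v k) \<in> borel_measurable (D i)"
  unfolding measurable_cong_sets[OF D_sets refl] value_space_def
  by (rule measurable_component_singleton) simp

definition matched_upd :: "nat \<Rightarrow> nat \<Rightarrow> ((nat \<Rightarrow> real) \<times> (nat \<Rightarrow> nat \<Rightarrow> real)) set" where
  "matched_upd i k = {xV \<in> space (value_space m \<Otimes>\<^sub>M P). (i, k) \<in> M ((snd xV)(i := fst xV))}"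

lemma matched_upd_sets:
  assumes "i < n"
  shows "matched_upd i k \<in> sets (value_space m \<Otimes>\<^sub>M P)"
proof -
  have "snd \<in> measurable (value_space m \<Otimes>\<^sub>M P) (PiM {..<n} (\<lambda>_. value_space m))"
    using measurable_snd[of "value_space m" P]
    by (simp add: measurable_cong_sets[OF refl sets_P[unfolded profile_space_def]])
  then have upd: "(\<lambda>xV. (snd xV)(i := fst xV)) \<in> measurable (value_space m \<Otimes>\<^sub>M P) (profile_space n m)"
    unfolding profile_space_def by (rule measurable_fun_upd[rotated]) (use assms in auto)
  have "matched_upd i k = (\<lambda>xV. (snd xV)(i := fst xV)) -` {V \<in> space (profile_space n m). (i, k) \<in> M V}
      \<inter> space (value_space m \<Otimes>\<^sub>M P)"
    unfolding matched_upd_def using measurable_space[OF upd] by auto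
  then show ?thesis
    using measurable_sets[OF upd M_meas] by simp
qed

lemma rec_prob_eq_measure:
  assumes "x \<in> space (value_space m)"
  shows "p i x k = measure P (Pair x -` matched_upd i k)"
  using assms unfolding rec_prob_def matched_upd_def by (simp add: space_pair_measure)

lemma rec_prob_nonneg: "0 \<le> p i x k"
  unfolding rec_prob_def by simp

lemma rec_prob_le_1: "p i x k \<le> 1"
  using prob_space.prob_le_1[OF prob_space_P] unfolding rec_prob_def by simp

lemma borel_measurable_rec_prob:
  assumes "i < n"
  shows "(\<lambda>x. p i x k) \<in> borel_measurable (D i)"
proof -
  interpret prob_space P by (rule prob_space_P)
  have "(\<lambda>x. measure P (Pair x -` matched_upd i k)) \<in> borel_measurable (value_space m)"
    using measurable_emeasure_Pair[OF matched_upd_sets[OF assms]] unfolding measure_def by measurable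
  then have "(\<lambda>x. p i x k) \<in> borel_measurable (value_space m)"
    by (rule measurable_cong[THEN iffD1, rotated]) (simp add: rec_prob_eq_measure)
  then show ?thesis
    by (simp add: measurable_cong_sets[OF D_sets[OF assms] refl])
qed

lemma sum_rec_prob_le_1:
  assumes i: "i < n" and x: "x \<in> space (value_space m)"
  shows "(\<Sum>k<m. p i x k) \<le> 1"
proof -
  interpret prob_space P by (rule prob_space_P)
  have "disjoint_family_on (\<lambda>k. Pair x -` matched_upd i k) {..<m}"
    unfolding disjoint_family_on_def matched_upd_def using M_item_unique by blast
  then have "(\<Sum>k<m. p i x k) = prob (\<Union>k<m. Pair x -` matched_upd i k)"
    using sets_Pair1[OF matched_upd_sets[OF i]] unfolding rec_prob_eq_measure[OF x]
    by (intro finite_measure_finite_Union[symmetric]) auto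
  then show ?thesis by simp
qed

lemma measurable_profile_value:
  "i < n \<Longrightarrow> k < m \<Longrightarrow> (\<lambda>V. V i k) \<in> borel_measurable P"
  using measurable_compose[OF measurable_component_singleton[of i "{..<n}" D] measurable_component_value]
  by simp

lemma nn_integral_fun_upd:
  assumes i: "i < n" and y: "y \<in> space (D i)" and f: "f \<in> borel_measurable P"
  shows "(\<integral>\<^sup>+V. f (V(i := y)) \<partial>P) = (\<integral>\<^sup>+x. f (x(i := y)) \<partial>PiM ({..<n} - {i}) D)"
proof -
  interpret prob_space "D i" by (rule D_prob[OF i])
  have "(\<lambda>V. V(i := y)) \<in> measurable P P"
    by (rule measurable_fun_upd[where J="{..<n}"]) (use i y in auto)
  then have "(\<lambda>V. f (V(i := y))) \<in> borel_measurable P"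
    using f by (rule measurable_compose)
  then have "(\<integral>\<^sup>+V. f (V(i := y)) \<partial>P)
      = (\<integral>\<^sup>+y'. (\<integral>\<^sup>+x. f ((x(i := y'))(i := y)) \<partial>PiM ({..<n} - {i}) D) \<partial>D i)"
    using i by (intro nn_integral_PiM_remove D_prob) auto
  then show ?thesis by (simp add: emeasure_space_1)
qed

lemma nn_integral_matched_weight:
  assumes i: "i < n" and h: "h \<in> borel_measurable (D i)"
  shows "(\<integral>\<^sup>+V. h (V i) * indicator {V \<in> space P. (i, k) \<in> M V} V \<partial>P)
    = (\<integral>\<^sup>+y. h y * ennreal (p i y k) \<partial>D i)"
proof -
  interpret P: prob_space P by (rule prob_space_P)
  let ?P' = "PiM ({..<n} - {i}) D" and ?S = "{V \<in> space P. (i, k) \<in> M V}"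
  have S: "?S \<in> sets P" by (rule matched_sets)
  have "(\<integral>\<^sup>+V. h (V i) * indicator ?S V \<partial>P) = (\<integral>\<^sup>+y. (\<integral>\<^sup>+x. h y * indicator ?S (x(i := y)) \<partial>?P') \<partial>D i)"
    using i h S by (subst nn_integral_PiM_remove) (auto intro: D_prob)
  also have "\<dots> = (\<integral>\<^sup>+y. h y * ennreal (p i y k) \<partial>D i)"
  proof (intro nn_integral_cong)
    fix y assume y: "y \<in> space (D i)"
    have upd: "(\<lambda>x. x(i := y)) \<in> measurable ?P' P"
      by (rule measurable_fun_upd[where J="{..<n} - {i}"]) (use i y in auto)
    have upd_P: "(\<lambda>V. V(i := y)) \<in> measurable P P"
      by (rule measurable_fun_upd[where J="{..<n}"]) (use i y in auto)
    have "{V \<in> space P. (i, k) \<in> M (V(i := y))} = (\<lambda>V. V(i := y)) -` ?S \<inter> space P"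
      using measurable_space[OF upd_P] by auto
    then have "ennreal (p i y k) = emeasure P ((\<lambda>V. V(i := y)) -` ?S \<inter> space P)"
      unfolding rec_prob_def by (simp add: P.emeasure_eq_measure)
    also have "\<dots> = (\<integral>\<^sup>+V. indicator ((\<lambda>V. V(i := y)) -` ?S \<inter> space P) V \<partial>P)"
      using measurable_sets[OF upd_P S] by simp
    also have "\<dots> = (\<integral>\<^sup>+V. indicator ?S (V(i := y)) \<partial>P)"
      by (intro nn_integral_cong) (simp split: split_indicator)
    also have "\<dots> = (\<integral>\<^sup>+x. indicator ?S (x(i := y)) \<partial>?P')"
      using i y S by (intro nn_integral_fun_upd) auto
    finally show "(\<integral>\<^sup>+x. h y * indicator ?S (x(i := y)) \<partial>?P') = h y * ennreal (p i y k)"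
      using upd S by (simp add: nn_integral_cmult)
  qed
  finally show ?thesis .
qed

lemma sum_nn_integral_rec_prob_le_1: "(\<Sum>i<n. \<integral>\<^sup>+y. ennreal (p i y k) \<partial>D i) \<le> 1"
proof -
  interpret prob_space P by (rule prob_space_P)
  let ?S = "\<lambda>i. {V \<in> space P. (i, k) \<in> M V}"
  have "(\<integral>\<^sup>+y. ennreal (p i y k) \<partial>D i) = emeasure P (?S i)" if "i < n" for i
  proof -
    have "(\<integral>\<^sup>+y. ennreal (p i y k) \<partial>D i) = (\<integral>\<^sup>+V. 1 * indicator (?S i) V \<partial>P)"
      using nn_integral_matched_weight[OF that, of "\<lambda>_. 1" k] by simp
    also have "\<dots> = emeasure P (?S i)"
      using matched_sets by simp
    finally show ?thesis .
  qed
  then have "(\<Sum>i<n. \<integral>\<^sup>+y. ennreal (p i y k) \<partial>D i) = (\<Sum>i<n. emeasure P (?S i))"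
    by simp
  also have "\<dots> = emeasure P (\<Union>i<n. ?S i)"
    using matched_sets M_buyer_unique by (intro sum_emeasure) (auto simp: disjoint_family_on_def)
  also have "\<dots> \<le> 1"
    by (rule measure_le_1)
  finally show ?thesis .
qed

lemma OPT_le_sum_matched:
  "ennreal (OPT M V) \<le> (\<Sum>i<n. \<Sum>k<m. ennreal (V i k) * of_bool ((i, k) \<in> M V))"
proof -
  have "M V \<subseteq> {..<n} \<times> {..<m}" using M_matching unfolding is_matching_def by blast
  then have "OPT M V = (\<Sum>x\<in>{..<n} \<times> {..<m}. if x \<in> M V then V (fst x) (snd x) else 0)"
    unfolding OPT_def match_weight_def
    by (simp add: sum.inter_restrict[symmetric] case_prod_beta' inf.absorb2)
  also have "\<dots> = (\<Sum>i<n. \<Sum>k<m. if (i, k) \<in> M V then V i k else 0)"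
    by (simp add: sum.cartesian_product case_prod_beta')
  finally have "ennreal (OPT M V) \<le> (\<Sum>i<n. ennreal (\<Sum>k<m. if (i, k) \<in> M V then V i k else 0))"
    by (simp only: ennreal_sum_le_sum_ennreal)
  also have "\<dots> \<le> (\<Sum>i<n. \<Sum>k<m. ennreal (if (i, k) \<in> M V then V i k else 0))"
    by (intro sum_mono ennreal_sum_le_sum_ennreal)
  also have "\<dots> = (\<Sum>i<n. \<Sum>k<m. ennreal (V i k) * of_bool ((i, k) \<in> M V))"
    by (intro sum.cong refl) simp
  finally show ?thesis .
qed

lemma nn_integral_OPT_le:
  "(\<integral>\<^sup>+V. ennreal (OPT M V) \<partial>P) \<le> (\<Sum>k<m. \<Sum>i<n. \<integral>\<^sup>+y. ennreal (y k) * ennreal (p i y k) \<partial>D i)"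
proof -
  let ?S = "\<lambda>i k. {V \<in> space P. (i, k) \<in> M V}"
  have "(\<integral>\<^sup>+V. ennreal (OPT M V) \<partial>P)
      \<le> (\<integral>\<^sup>+V. (\<Sum>i<n. \<Sum>k<m. ennreal (V i k) * indicator (?S i k) V) \<partial>P)"
    using OPT_le_sum_matched by (intro nn_integral_mono) (simp add: indicator_def)
  also have "\<dots> = (\<Sum>i<n. \<Sum>k<m. \<integral>\<^sup>+V. ennreal (V i k) * indicator (?S i k) V \<partial>P)"
  proof -
    have meas: "(\<lambda>V. ennreal (V i k) * indicator (?S i k) V) \<in> borel_measurable P" if "i < n" "k < m" for i k
      by (intro borel_measurable_times_ennreal borel_measurable_indicator matched_sets)
        (use measurable_profile_value[OF that] in measurable)
    then have "(\<integral>\<^sup>+V. (\<Sum>i<n. \<Sum>k<m. ennreal (V i k) * indicator (?S i k) V) \<partial>P)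
        = (\<Sum>i<n. \<integral>\<^sup>+V. (\<Sum>k<m. ennreal (V i k) * indicator (?S i k) V) \<partial>P)"
      by (intro nn_integral_sum borel_measurable_sum) auto
    also have "\<dots> = (\<Sum>i<n. \<Sum>k<m. \<integral>\<^sup>+V. ennreal (V i k) * indicator (?S i k) V \<partial>P)"
      using meas by (intro sum.cong refl nn_integral_sum) auto
    finally show ?thesis .
  qed
  also have "\<dots> = (\<Sum>i<n. \<Sum>k<m. \<integral>\<^sup>+y. ennreal (y k) * ennreal (p i y k) \<partial>D i)"
    by (intro sum.cong refl nn_integral_matched_weight)
      (auto intro: measurable_compose[OF measurable_component_value measurable_ennreal])
  finally show ?thesis by (simp add: sum.swap[of _ "{..<n}"])
qed

definition mass_above :: "nat \<Rightarrow> nat \<Rightarrow> real \<Rightarrow> real" where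
  "mass_above j k y = (\<integral>v. p j v k * (if y < v k then 1 else 0) \<partial>D j)"

definition mass_from :: "nat \<Rightarrow> nat \<Rightarrow> real \<Rightarrow> real" where
  "mass_from j k y = (\<integral>v. p j v k * (if y \<le> v k then 1 else 0) \<partial>D j)"

definition unsold_prob :: "nat \<Rightarrow> real \<Rightarrow> real \<Rightarrow> real" where
  "unsold_prob k y \<theta> = (\<Prod>j<n. 1 - (mass_above j k y + \<theta> * (mass_from j k y - mass_above j k y)))"

definition balanced :: "(nat \<Rightarrow> real) \<Rightarrow> (nat \<Rightarrow> real) \<Rightarrow> bool" where
  "balanced \<tau> \<theta> \<longleftrightarrow> (\<forall>k<m. exp (-1) \<le> unsold_prob k (\<tau> k) (\<theta> k)
     \<and> (\<tau> k = 0 \<or> unsold_prob k (\<tau> k) (\<theta> k) \<le> exp (-1)))"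

context
  fixes j k :: nat
  assumes j: "j < n" and k: "k < m"
begin

lemma integrable_rec_prob_times:
  assumes "g \<in> borel_measurable borel" "\<And>x. 0 \<le> g x \<and> g x \<le> 1"
  shows "integrable (D j) (\<lambda>v. p j v k * g (v k))"
proof -
  interpret prob_space "D j" by (rule D_prob[OF j])
  note [measurable] = borel_measurable_rec_prob[OF j] measurable_component_value[OF j k]
  have "\<bar>p j v k * g (v k)\<bar> \<le> 1" for v
    using assms(2)[of "v k"] rec_prob_nonneg[of j v k] rec_prob_le_1[of j v k]
    by (simp add: abs_mult mult_le_one)
  moreover have "(\<lambda>v. p j v k * g (v k)) \<in> borel_measurable (D j)"
    using assms(1) by measurable
  ultimately show ?thesis
    by (intro integrable_const_bound[where B=1] AE_I2) auto
qed

lemma tendsto_integral_rec_prob_times: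
  assumes "\<And>N. g N \<in> borel_measurable borel" "\<And>N x. 0 \<le> g N x \<and> g N x \<le> 1"
    and "h \<in> borel_measurable borel" "\<And>x. (\<lambda>N. g N x) \<longlonglongrightarrow> h x"
  shows "(\<lambda>N. \<integral>v. p j v k * g N (v k) \<partial>D j) \<longlonglongrightarrow> (\<integral>v. p j v k * h (v k) \<partial>D j)"
proof -
  interpret prob_space "D j" by (rule D_prob[OF j])
  note [measurable] = borel_measurable_rec_prob[OF j] measurable_component_value[OF j k]
  show ?thesis
  proof (rule integral_dominated_convergence[where w="\<lambda>_. 1"])
    show "AE v in D j. norm (p j v k * g N (v k)) \<le> 1" for N
      using assms(2) rec_prob_nonneg[of j _ k] rec_prob_le_1[of j _ k]
      by (intro AE_I2) (auto simp: abs_mult intro: mult_le_one)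
    show "AE v in D j. (\<lambda>N. p j v k * g N (v k)) \<longlonglongrightarrow> p j v k * h (v k)"
      using assms(4) by (intro AE_I2 tendsto_mult tendsto_const)
  qed (use assms in auto)
qed

lemma mass_bounds: "0 \<le> mass_above j k y \<and> mass_above j k y \<le> mass_from j k y \<and> mass_from j k y \<le> 1"
proof -
  interpret prob_space "D j" by (rule D_prob[OF j])
  have "mass_from j k y \<le> (\<integral>v. 1 \<partial>D j)"
    unfolding mass_from_def using rec_prob_le_1[of j _ k]
    by (intro integral_mono integrable_rec_prob_times) auto
  moreover have "mass_above j k y \<le> mass_from j k y"
    unfolding mass_above_def mass_from_def using rec_prob_nonneg[of j _ k]
    by (intro integral_mono integrable_rec_prob_times) auto
  ultimately show ?thesis
    unfolding mass_above_def using rec_prob_nonneg[of j _ k] by (simp add: prob_space)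
qed

lemma mass_above_antimono: "y \<le> y' \<Longrightarrow> mass_above j k y' \<le> mass_above j k y"
  unfolding mass_above_def using rec_prob_nonneg[of j _ k]
  by (intro integral_mono integrable_rec_prob_times) auto

lemma mass_above_right: "(\<lambda>N. mass_above j k (y + inverse (real (Suc N)))) \<longlonglongrightarrow> mass_above j k y"
  unfolding mass_above_def by (intro tendsto_integral_rec_prob_times tendsto_step_right) auto

lemma mass_above_left: "(\<lambda>N. mass_above j k (y - inverse (real (Suc N)))) \<longlonglongrightarrow> mass_from j k y"
  unfolding mass_above_def mass_from_def by (intro tendsto_integral_rec_prob_times tendsto_step_left) auto

lemma mass_above_at_top: "(\<lambda>N. mass_above j k (real N)) \<longlonglongrightarrow> 0"
  using tendsto_integral_rec_prob_times[of "\<lambda>N x. if real N < x then 1 else 0" "\<lambda>_. 0"]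
  unfolding mass_above_def by (simp add: tendsto_step_at_top)

end

lemma exists_balanced_prices:
  "\<exists>\<tau> \<theta>. (\<forall>k. 0 \<le> \<tau> k \<and> 0 \<le> \<theta> k \<and> \<theta> k \<le> 1) \<and> balanced \<tau> \<theta>"
proof -
  have "\<exists>y \<theta>. 0 \<le> y \<and> 0 \<le> \<theta> \<and> \<theta> \<le> 1 \<and> (k < m \<longrightarrow>
      exp (-1) \<le> unsold_prob k y \<theta> \<and> (y = 0 \<or> unsold_prob k y \<theta> \<le> exp (-1)))" for k
  proof (cases "k < m")
    case True
    have "\<exists>y \<theta>. 0 \<le> y \<and> 0 \<le> \<theta> \<and> \<theta> \<le> 1 \<and>
        exp (-1) \<le> unsold_prob k y \<theta> \<and> (y = 0 \<or> unsold_prob k y \<theta> \<le> exp (-1))"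
      unfolding unsold_prob_def using True
      by (intro exists_tie_breaking_threshold) (auto simp: mass_bounds simp del: of_nat_Suc
          intro: mass_above_antimono mass_above_right mass_above_left mass_above_at_top)
    then show ?thesis by blast
  qed auto
  then obtain \<tau> \<theta> where "\<And>k. 0 \<le> \<tau> k \<and> 0 \<le> \<theta> k \<and> \<theta> k \<le> 1 \<and> (k < m \<longrightarrow>
      exp (-1) \<le> unsold_prob k (\<tau> k) (\<theta> k) \<and> (\<tau> k = 0 \<or> unsold_prob k (\<tau> k) (\<theta> k) \<le> exp (-1)))"
    by metis
  then show ?thesis unfolding balanced_def by blast
qed

end

locale fixed_prices = prophet_secretary +
  fixes \<tau> \<theta> :: "nat \<Rightarrow> real"
  assumes price_nonneg: "\<And>k. 0 \<le> \<tau> k"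
    and tie_prob_nonneg: "\<And>k. 0 \<le> \<theta> k" and tie_prob_le_1: "\<And>k. \<theta> k \<le> 1"
begin

abbreviation cand :: "nat \<Rightarrow> (nat \<Rightarrow> real) \<Rightarrow> real \<Rightarrow> nat option" where
  "cand j v u \<equiv> select_cand m (p j v) u"

definition buys :: "nat \<Rightarrow> real \<Rightarrow> real \<Rightarrow> bool" where
  "buys k y w \<longleftrightarrow> \<tau> k < y \<or> (y = \<tau> k \<and> w < \<theta> k)"

definition would_buy :: "nat \<Rightarrow> nat \<Rightarrow> (nat \<Rightarrow> real) \<Rightarrow> real \<Rightarrow> real \<Rightarrow> bool" where
  "would_buy j k v u w \<longleftrightarrow> cand j v u = Some k \<and> buys k (v k) w"

definition sold :: "nat \<Rightarrow> (nat \<Rightarrow> nat \<Rightarrow> real) \<Rightarrow> (nat \<Rightarrow> real) \<Rightarrow> (nat \<Rightarrow> real) \<Rightarrow> real" where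
  "sold k V U W = 1 - (\<Prod>j<n. of_bool (\<not> would_buy j k (V j) (U j) (W j)))"

definition gain ::
  "nat \<Rightarrow> nat \<Rightarrow> (nat \<Rightarrow> nat \<Rightarrow> real) \<Rightarrow> (nat \<Rightarrow> real) \<Rightarrow> (nat \<Rightarrow> real) \<Rightarrow> (nat \<Rightarrow> real) \<Rightarrow> real" where
  "gain i k V T U W = (\<Prod>j<n. if j = i then max 0 (V j k - \<tau> k) * of_bool (cand j (V j) (U j) = Some k)
     else of_bool (\<not> (T j \<le> T i \<and> would_buy j k (V j) (U j) (W j))))"

lemma sold_eq: "sold k V U W = of_bool (\<exists>j<n. would_buy j k (V j) (U j) (W j))"
  unfolding sold_def by (auto simp: prod_of_bool)

lemma gain_eq:
  assumes "i < n"
  shows "gain i k V T U W = max 0 (V i k - \<tau> k) * of_bool (cand i (V i) (U i) = Some k)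
    * of_bool (\<forall>j<n. j \<noteq> i \<longrightarrow> \<not> (T j \<le> T i \<and> would_buy j k (V j) (U j) (W j)))"
proof -
  have "gain i k V T U W = max 0 (V i k - \<tau> k) * of_bool (cand i (V i) (U i) = Some k)
      * (\<Prod>j\<in>{..<n} - {i}. of_bool (\<not> (T j \<le> T i \<and> would_buy j k (V j) (U j) (W j))))"
    unfolding gain_def using assms by (subst prod.remove[of _ i]) (auto intro!: prod.cong)
  then show ?thesis by (auto simp: prod_of_bool)
qed

lemma sold_nonneg: "0 \<le> sold k V U W"
  by (simp add: sold_eq)

lemma gain_nonneg: "0 \<le> gain i k V T U W"
  unfolding gain_def by (intro prod_nonneg) auto

lemma alg_welfare_ge:
  "(\<Sum>k<m. \<tau> k * sold k V U W) + (\<Sum>k<m. \<Sum>i<n. gain i k V T U W) \<le> alg_welfare n m D M \<tau> \<theta> V T U W"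
proof -
  interpret sequential_offers m "\<lambda>i. cand i (V i) (U i)" "\<lambda>i k. buys k (V i k) (W i)" V \<tau> T
    by unfold_locales (auto intro: select_cand_less price_nonneg simp: buys_def)
  have "(\<lambda>i. buyer_step \<tau> \<theta> (V i) (cand i (V i) (U i)) (W i)) = offer_step"
    by (intro ext) (unfold buyer_step_def offer_step_def, simp add: buys_def split: option.split)
  then have "welfare_lb ({}, 0) {..<n} \<le> alg_welfare n m D M \<tau> \<theta> V T U W"
    using welfare_lb_le_fold[of "sort_key T [0..<n]" "({}, 0)"]
    by (simp add: alg_welfare_def atLeast0LessThan)
  moreover have "revenue_lb {} {..<n} = (\<Sum>k<m. \<tau> k * sold k V U W)"
    unfolding revenue_lb_def sold_eq would_buy_def by (intro sum.cong) auto
  moreover have "utility_lb {} {..<n} i = (\<Sum>k<m. gain i k V T U W)" if "i < n" for i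
    unfolding utility_lb_def gain_eq[OF that] would_buy_def
    by (intro sum.cong) (auto simp: buys_def)
  ultimately show ?thesis
    unfolding welfare_lb_def by (simp add: sum.swap[of _ "{..<m}"])
qed

definition accept_prob :: "nat \<Rightarrow> real \<Rightarrow> real" where
  "accept_prob k y = (if \<tau> k < y then 1 else if y = \<tau> k then \<theta> k else 0)"

definition buy_prob :: "nat \<Rightarrow> nat \<Rightarrow> (nat \<Rightarrow> real) \<Rightarrow> real" where
  "buy_prob j k v = p j v k * accept_prob k (v k)"

lemma accept_prob_nonneg: "0 \<le> accept_prob k y"
  and accept_prob_le_1: "accept_prob k y \<le> 1"
  unfolding accept_prob_def using tie_prob_nonneg tie_prob_le_1 by auto

lemma buy_prob_nonneg: "0 \<le> buy_prob j k v"
  and buy_prob_le_1: "buy_prob j k v \<le> 1"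
  unfolding buy_prob_def
  using rec_prob_nonneg rec_prob_le_1 accept_prob_nonneg accept_prob_le_1 by (auto intro: mult_le_one)

text \<open>Suffix \<open>_W\<close>: averaged over the tie-breaking coins; \<open>_UW\<close>: also over the selection
  coins; \<open>gain_at i k V t\<close>: also over the arrival times of the other buyers, buyer \<open>i\<close> arriving
  at time \<open>t\<close>.\<close>

definition sold_W :: "nat \<Rightarrow> (nat \<Rightarrow> nat \<Rightarrow> real) \<Rightarrow> (nat \<Rightarrow> real) \<Rightarrow> real" where
  "sold_W k V U = 1 - (\<Prod>j<n. 1 - of_bool (cand j (V j) (U j) = Some k) * accept_prob k (V j k))"

definition gain_W :: "nat \<Rightarrow> nat \<Rightarrow> (nat \<Rightarrow> nat \<Rightarrow> real) \<Rightarrow> (nat \<Rightarrow> real) \<Rightarrow> (nat \<Rightarrow> real) \<Rightarrow> real" where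
  "gain_W i k V T U = (\<Prod>j<n. if j = i then max 0 (V j k - \<tau> k) * of_bool (cand j (V j) (U j) = Some k)
     else 1 - of_bool (T j \<le> T i \<and> cand j (V j) (U j) = Some k) * accept_prob k (V j k))"

lemma nn_integral_tie_coin:
  "(\<integral>\<^sup>+w. ennreal (of_bool (\<not> (b \<and> buys k y w))) \<partial>unif01) = ennreal (1 - of_bool b * accept_prob k y)"
proof (cases "b \<and> y = \<tau> k")
  case True
  interpret prob_space unif01 by (rule prob_space_unif01)
  have "(\<integral>\<^sup>+w. ennreal (of_bool (\<not> (b \<and> buys k y w))) \<partial>unif01)
      = (\<integral>\<^sup>+w. ennreal (if w \<in> {w. w < \<theta> k} then 0 else 1) \<partial>unif01)"
    using True by (intro nn_integral_cong) (auto simp: buys_def)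
  also have "\<dots> = ennreal (1 - \<theta> k)"
    using measure_unif01_less[OF tie_prob_nonneg tie_prob_le_1] by (subst nn_integral_If_set) auto
  finally show ?thesis using True by (simp add: accept_prob_def)
next
  case False
  then show ?thesis by (auto simp: buys_def accept_prob_def)
qed

lemma borel_measurable_sold_tie_coins: "(\<lambda>W. sold k V U W) \<in> borel_measurable (unif_vec n)"
  unfolding sold_def unif_vec_def would_buy_def buys_def
  by (intro borel_measurable_diff borel_measurable_const borel_measurable_PiM_prod) measurable

lemma borel_measurable_gain_tie_coins: "(\<lambda>W. gain i k V T U W) \<in> borel_measurable (unif_vec n)"
  unfolding gain_def unif_vec_def would_buy_def buys_def
  by (intro borel_measurable_PiM_prod) measurable

lemma nn_integral_sold_tie_coins:
  "(\<integral>\<^sup>+W. ennreal (sold k V U W) \<partial>unif_vec n) = ennreal (sold_W k V U)"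
  unfolding sold_def sold_W_def unif_vec_def
proof (rule nn_integral_PiM_one_minus_prod)
  fix j
  show "(\<lambda>w. of_bool (\<not> would_buy j k (V j) (U j) w)) \<in> borel_measurable unif01"
    unfolding would_buy_def buys_def by measurable
  show "(\<integral>\<^sup>+w. ennreal (of_bool (\<not> would_buy j k (V j) (U j) w)) \<partial>unif01)
      = ennreal (1 - of_bool (cand j (V j) (U j) = Some k) * accept_prob k (V j k))"
    unfolding would_buy_def by (rule nn_integral_tie_coin)
  show "0 \<le> 1 - of_bool (cand j (V j) (U j) = Some k) * accept_prob k (V j k)"
    using accept_prob_le_1[of k "V j k"] by simp
qed (auto intro: prob_space_unif01)

lemma nn_integral_gain_tie_coins:
  "(\<integral>\<^sup>+W. ennreal (gain i k V T U W) \<partial>unif_vec n) = ennreal (gain_W i k V T U)"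
  unfolding gain_def gain_W_def unif_vec_def
proof (rule nn_integral_PiM_prod_real)
  fix j
  show "(\<lambda>w. if j = i then max 0 (V j k - \<tau> k) * of_bool (cand j (V j) (U j) = Some k)
      else of_bool (\<not> (T j \<le> T i \<and> would_buy j k (V j) (U j) w))) \<in> borel_measurable unif01"
    unfolding would_buy_def buys_def by measurable
  show "(\<integral>\<^sup>+w. ennreal (if j = i then max 0 (V j k - \<tau> k) * of_bool (cand j (V j) (U j) = Some k)
        else of_bool (\<not> (T j \<le> T i \<and> would_buy j k (V j) (U j) w))) \<partial>unif01)
      = ennreal (if j = i then max 0 (V j k - \<tau> k) * of_bool (cand j (V j) (U j) = Some k)
        else 1 - of_bool (T j \<le> T i \<and> cand j (V j) (U j) = Some k) * accept_prob k (V j k))"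
    using nn_integral_tie_coin[of "T j \<le> T i \<and> cand j (V j) (U j) = Some k" k "V j k"]
    by (simp add: would_buy_def conj_assoc)
  show "0 \<le> (if j = i then max 0 (V j k - \<tau> k) * of_bool (cand j (V j) (U j) = Some k)
        else 1 - of_bool (T j \<le> T i \<and> cand j (V j) (U j) = Some k) * accept_prob k (V j k))"
    using accept_prob_le_1[of k "V j k"] by simp
qed (auto intro: prob_space_unif01)

lemma nn_integral_cand_If:
  assumes "j < n" "v \<in> space (D j)" "k < m" "0 \<le> x" "0 \<le> y"
  shows "(\<integral>\<^sup>+u. ennreal (if cand j v u = Some k then x else y) \<partial>unif01)
    = ennreal (p j v k * x + (1 - p j v k) * y)"
  using assms sum_rec_prob_le_1[of j v] space_D[of j]
  by (intro nn_integral_select_cand_If rec_prob_nonneg) auto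

definition sold_UW :: "nat \<Rightarrow> (nat \<Rightarrow> nat \<Rightarrow> real) \<Rightarrow> real" where
  "sold_UW k V = 1 - (\<Prod>j<n. 1 - buy_prob j k (V j))"

definition gain_UW :: "nat \<Rightarrow> nat \<Rightarrow> (nat \<Rightarrow> nat \<Rightarrow> real) \<Rightarrow> (nat \<Rightarrow> real) \<Rightarrow> real" where
  "gain_UW i k V T = (\<Prod>j<n. if j = i then max 0 (V j k - \<tau> k) * p j (V j) k
     else 1 - of_bool (T j \<le> T i) * buy_prob j k (V j))"

lemma borel_measurable_sold_W_selection_coins: "(\<lambda>U. sold_W k V U) \<in> borel_measurable (unif_vec n)"
  unfolding sold_W_def unif_vec_def
  by (intro borel_measurable_diff borel_measurable_const borel_measurable_PiM_prod) measurable

lemma borel_measurable_gain_W_selection_coins: "(\<lambda>U. gain_W i k V T U) \<in> borel_measurable (unif_vec n)"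
  unfolding gain_W_def unif_vec_def by (intro borel_measurable_PiM_prod) measurable

lemma nn_integral_sold_W_selection_coins:
  assumes V: "V \<in> space P" and k: "k < m"
  shows "(\<integral>\<^sup>+U. ennreal (sold_W k V U) \<partial>unif_vec n) = ennreal (sold_UW k V)"
  unfolding sold_W_def sold_UW_def unif_vec_def
proof (rule nn_integral_PiM_one_minus_prod)
  fix j assume j: "j \<in> {..<n}"
  have "(\<integral>\<^sup>+u. ennreal (if cand j (V j) u = Some k then 1 - accept_prob k (V j k) else 1) \<partial>unif01)
      = ennreal (1 - buy_prob j k (V j))"
    using j V k accept_prob_le_1[of k "V j k"]
    by (subst nn_integral_cand_If) (auto simp: buy_prob_def algebra_simps space_PiM)
  moreover have "(\<integral>\<^sup>+u. ennreal (1 - of_bool (cand j (V j) u = Some k) * accept_prob k (V j k)) \<partial>unif01)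
      = (\<integral>\<^sup>+u. ennreal (if cand j (V j) u = Some k then 1 - accept_prob k (V j k) else 1) \<partial>unif01)"
    by (intro nn_integral_cong) simp
  ultimately show "(\<integral>\<^sup>+u. ennreal (1 - of_bool (cand j (V j) u = Some k) * accept_prob k (V j k)) \<partial>unif01)
      = ennreal (1 - buy_prob j k (V j))"
    by simp
  show "(\<lambda>u. 1 - of_bool (cand j (V j) u = Some k) * accept_prob k (V j k)) \<in> borel_measurable unif01"
    by measurable
  show "0 \<le> 1 - buy_prob j k (V j)" using buy_prob_le_1 by simp
  fix u
  show "0 \<le> 1 - of_bool (cand j (V j) u = Some k) * accept_prob k (V j k)
      \<and> 1 - of_bool (cand j (V j) u = Some k) * accept_prob k (V j k) \<le> 1"
    using accept_prob_nonneg[of k "V j k"] accept_prob_le_1[of k "V j k"] by simp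
qed (auto intro: prob_space_unif01)

lemma nn_integral_gain_W_selection_coins:
  assumes V: "V \<in> space P" and k: "k < m" and i: "i < n"
  shows "(\<integral>\<^sup>+U. ennreal (gain_W i k V T U) \<partial>unif_vec n) = ennreal (gain_UW i k V T)"
  unfolding gain_W_def gain_UW_def unif_vec_def
proof (rule nn_integral_PiM_prod_real)
  fix j assume j: "j \<in> {..<n}"
  let ?g = "\<lambda>u. if j = i then max 0 (V j k - \<tau> k) * of_bool (cand j (V j) u = Some k)
    else 1 - of_bool (T j \<le> T i \<and> cand j (V j) u = Some k) * accept_prob k (V j k)"
  have Vj: "V j \<in> space (D j)" using V j by (auto simp: space_PiM)
  have "?g u = (if cand j (V j) u = Some k
      then (if j = i then max 0 (V j k - \<tau> k) else 1 - of_bool (T j \<le> T i) * accept_prob k (V j k))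
      else (if j = i then 0 else 1))" for u
    by auto
  moreover have "(\<integral>\<^sup>+u. ennreal (if cand j (V j) u = Some k
      then (if j = i then max 0 (V j k - \<tau> k) else 1 - of_bool (T j \<le> T i) * accept_prob k (V j k))
      else (if j = i then 0 else 1)) \<partial>unif01)
    = ennreal (if j = i then max 0 (V j k - \<tau> k) * p j (V j) k
      else 1 - of_bool (T j \<le> T i) * buy_prob j k (V j))"
    using j Vj k accept_prob_le_1[of k "V j k"]
    by (subst nn_integral_cand_If) (auto simp: buy_prob_def algebra_simps)
  ultimately show "(\<integral>\<^sup>+u. ennreal (?g u) \<partial>unif01) = ennreal (if j = i then max 0 (V j k - \<tau> k) * p j (V j) k
      else 1 - of_bool (T j \<le> T i) * buy_prob j k (V j))"
    by simp
  show "?g \<in> borel_measurable unif01" by measurable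
  show "0 \<le> (if j = i then max 0 (V j k - \<tau> k) * p j (V j) k
      else 1 - of_bool (T j \<le> T i) * buy_prob j k (V j))"
    using buy_prob_le_1[of j k "V j"] rec_prob_nonneg[of j "V j" k] by auto
  fix u show "0 \<le> ?g u" using accept_prob_le_1[of k "V j k"] by simp
qed (auto intro: prob_space_unif01)

definition gain_at :: "nat \<Rightarrow> nat \<Rightarrow> (nat \<Rightarrow> nat \<Rightarrow> real) \<Rightarrow> real \<Rightarrow> real" where
  "gain_at i k V t = max 0 (V i k - \<tau> k) * p i (V i) k * (\<Prod>j\<in>{..<n} - {i}. 1 - t * buy_prob j k (V j))"

lemma nn_integral_gain_UW_other_arrival_times:
  assumes i: "i < n" and t: "0 \<le> t" "t \<le> 1"
  shows "(\<integral>\<^sup>+x. ennreal (gain_UW i k V (x(i := t))) \<partial>PiM ({..<n} - {i}) (\<lambda>_. unif01))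
    = ennreal (gain_at i k V t)"
proof -
  let ?J = "{..<n} - {i}" and ?c = "max 0 (V i k - \<tau> k) * p i (V i) k"
  have "gain_UW i k V (x(i := t)) = ?c * (\<Prod>j\<in>?J. 1 - of_bool (x j \<le> t) * buy_prob j k (V j))" for x
    unfolding gain_UW_def using i by (subst prod.remove[of _ i]) (auto intro!: prod.cong)
  then have "(\<integral>\<^sup>+x. ennreal (gain_UW i k V (x(i := t))) \<partial>PiM ?J (\<lambda>_. unif01))
      = ennreal ?c * (\<integral>\<^sup>+x. ennreal (\<Prod>j\<in>?J. 1 - of_bool (x j \<le> t) * buy_prob j k (V j)) \<partial>PiM ?J (\<lambda>_. unif01))"
    using rec_prob_nonneg[of i "V i" k]
    by (simp add: ennreal_mult' nn_integral_cmult borel_measurable_PiM_prod)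
  also have "(\<integral>\<^sup>+x. ennreal (\<Prod>j\<in>?J. 1 - of_bool (x j \<le> t) * buy_prob j k (V j)) \<partial>PiM ?J (\<lambda>_. unif01))
      = ennreal (\<Prod>j\<in>?J. 1 - t * buy_prob j k (V j))"
    using t buy_prob_nonneg buy_prob_le_1
    by (intro nn_integral_PiM_prod_real prob_space_unif01 nn_integral_arrival_before)
      (auto simp: mult_le_one)
  also have "ennreal ?c * ennreal (\<Prod>j\<in>?J. 1 - t * buy_prob j k (V j)) = ennreal (gain_at i k V t)"
    unfolding gain_at_def using rec_prob_nonneg[of i "V i" k] by (simp add: ennreal_mult'[symmetric])
  finally show ?thesis .
qed

lemma borel_measurable_gain_UW_arrival_times:
  assumes i: "i < n"
  shows "(\<lambda>T. gain_UW i k V T) \<in> borel_measurable (unif_vec n)"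
  unfolding gain_UW_def
proof (intro borel_measurable_prod)
  fix j assume "j \<in> {..<n}"
  note [measurable] = measurable_unif_vec_component[OF i]
    measurable_unif_vec_component[of j n, OF \<open>j \<in> {..<n}\<close>[unfolded lessThan_iff]]
  show "(\<lambda>T. if j = i then max 0 (V j k - \<tau> k) * p j (V j) k
      else 1 - of_bool (T j \<le> T i) * buy_prob j k (V j)) \<in> borel_measurable (unif_vec n)"
    unfolding of_bool_def by measurable
qed

lemma nn_integral_gain_UW_arrival_times:
  assumes i: "i < n"
  shows "(\<integral>\<^sup>+T. ennreal (gain_UW i k V T) \<partial>unif_vec n) = (\<integral>\<^sup>+t. ennreal (gain_at i k V t) \<partial>unif01)"
proof -
  note borel_measurable_gain_UW_arrival_times[OF i]
  then have "(\<integral>\<^sup>+T. ennreal (gain_UW i k V T) \<partial>unif_vec n)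
      = (\<integral>\<^sup>+t. (\<integral>\<^sup>+x. ennreal (gain_UW i k V (x(i := t))) \<partial>PiM ({..<n} - {i}) (\<lambda>_. unif01)) \<partial>unif01)"
    unfolding unif_vec_def using i by (intro nn_integral_PiM_remove prob_space_unif01) auto
  also have "\<dots> = (\<integral>\<^sup>+t. ennreal (gain_at i k V t) \<partial>unif01)"
  proof (rule nn_integral_cong_AE)
    show "AE t in unif01. (\<integral>\<^sup>+x. ennreal (gain_UW i k V (x(i := t))) \<partial>PiM ({..<n} - {i}) (\<lambda>_. unif01))
        = ennreal (gain_at i k V t)"
      using AE_unif01_in_unit by eventually_elim (use i in \<open>simp add: nn_integral_gain_UW_other_arrival_times\<close>)
  qed
  finally show ?thesis .
qed

definition mean_buy_prob :: "nat \<Rightarrow> nat \<Rightarrow> real" where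
  "mean_buy_prob j k = (\<integral>v. buy_prob j k v \<partial>D j)"

definition surplus :: "nat \<Rightarrow> nat \<Rightarrow> ennreal" where
  "surplus i k = (\<integral>\<^sup>+y. ennreal (max 0 (y k - \<tau> k) * p i y k) \<partial>D i)"

lemma borel_measurable_buy_prob:
  assumes "j < n" "k < m"
  shows "buy_prob j k \<in> borel_measurable (D j)"
proof -
  note [measurable] = borel_measurable_rec_prob[OF assms(1)] measurable_component_value[OF assms]
  show ?thesis unfolding buy_prob_def[abs_def] accept_prob_def by measurable
qed

lemma integrable_buy_prob:
  assumes "j < n" "k < m"
  shows "integrable (D j) (buy_prob j k)"
proof -
  interpret prob_space "D j" by (rule D_prob[OF assms(1)])
  show ?thesis
    using buy_prob_nonneg buy_prob_le_1 borel_measurable_buy_prob[OF assms]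
    by (intro integrable_const_bound[where B=1]) auto
qed

lemma mean_buy_prob_nonneg: "0 \<le> mean_buy_prob j k"
  unfolding mean_buy_prob_def by (simp add: buy_prob_nonneg)

lemma mean_buy_prob_le_1:
  assumes "j < n" "k < m"
  shows "mean_buy_prob j k \<le> 1"
proof -
  interpret prob_space "D j" by (rule D_prob[OF assms(1)])
  have "mean_buy_prob j k \<le> (\<integral>v. 1 \<partial>D j)"
    unfolding mean_buy_prob_def using integrable_buy_prob[OF assms] buy_prob_le_1
    by (intro integral_mono) auto
  then show ?thesis by (simp add: prob_space)
qed

lemma nn_integral_one_minus_buy_prob:
  assumes j: "j < n" and k: "k < m" and t: "0 \<le> t" "t \<le> 1"
  shows "(\<integral>\<^sup>+v. ennreal (1 - t * buy_prob j k v) \<partial>D j) = ennreal (1 - t * mean_buy_prob j k)"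
proof -
  interpret prob_space "D j" by (rule D_prob[OF j])
  have "(\<integral>\<^sup>+v. ennreal (t * buy_prob j k v) \<partial>D j) = ennreal (\<integral>v. t * buy_prob j k v \<partial>D j)"
    using integrable_buy_prob[OF j k] t buy_prob_nonneg by (intro nn_integral_eq_integral) auto
  then show ?thesis
    unfolding mean_buy_prob_def using t buy_prob_nonneg buy_prob_le_1 borel_measurable_buy_prob[OF j k]
    by (intro nn_integral_one_minus) (auto intro: mult_le_one)
qed

lemma nn_integral_sold_UW:
  assumes k: "k < m"
  shows "(\<integral>\<^sup>+V. ennreal (sold_UW k V) \<partial>P) = ennreal (1 - (\<Prod>j<n. 1 - mean_buy_prob j k))"
  unfolding sold_UW_def
  using nn_integral_one_minus_buy_prob[of _ k 1] borel_measurable_buy_prob[of _ k] k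
    buy_prob_nonneg buy_prob_le_1 mean_buy_prob_le_1
  by (intro nn_integral_PiM_one_minus_prod D_prob) auto

lemma nn_integral_gain_at_values:
  assumes i: "i < n" and k: "k < m" and t: "0 \<le> t" "t \<le> 1"
  shows "(\<integral>\<^sup>+V. ennreal (gain_at i k V t) \<partial>P)
    = surplus i k * ennreal (\<Prod>j\<in>{..<n} - {i}. 1 - t * mean_buy_prob j k)"
proof -
  define h where "h j v = (if j = i then ennreal (max 0 (v k - \<tau> k) * p j v k)
    else ennreal (1 - t * buy_prob j k v))" for j v
  have nonneg: "0 \<le> 1 - t * buy_prob j k v" for j v
    using t buy_prob_nonneg[of j k v] buy_prob_le_1[of j k v] by (simp add: mult_le_one)
  have "ennreal (gain_at i k V t) = (\<Prod>j<n. h j (V j))" for V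
  proof -
    have "(\<Prod>j<n. h j (V j)) = h i (V i) * (\<Prod>j\<in>{..<n} - {i}. ennreal (1 - t * buy_prob j k (V j)))"
      using i by (subst prod.remove[of _ i]) (auto simp: h_def intro!: prod.cong)
    then show ?thesis
      unfolding gain_at_def h_def using nonneg rec_prob_nonneg[of i "V i" k]
      by (simp add: ennreal_mult' prod_ennreal prod_nonneg)
  qed
  then have "(\<integral>\<^sup>+V. ennreal (gain_at i k V t) \<partial>P) = (\<integral>\<^sup>+V. (\<Prod>j<n. h j (V j)) \<partial>P)"
    by simp
  also have "\<dots> = (\<Prod>j<n. \<integral>\<^sup>+v. h j v \<partial>D j)"
  proof (rule nn_integral_PiM_prod)
    fix j assume "j \<in> {..<n}"
    then have j: "j < n" by simp
    note [measurable] = borel_measurable_rec_prob[OF j] borel_measurable_buy_prob[OF j k]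
      measurable_component_value[OF j k]
    show "h j \<in> borel_measurable (D j)"
      unfolding h_def[abs_def] by measurable
  qed (auto intro: D_prob)
  also have "\<dots> = surplus i k * (\<Prod>j\<in>{..<n} - {i}. ennreal (1 - t * mean_buy_prob j k))"
  proof -
    have "(\<integral>\<^sup>+v. h j v \<partial>D j) = ennreal (1 - t * mean_buy_prob j k)" if "j \<in> {..<n} - {i}" for j
      using that k t by (simp add: h_def nn_integral_one_minus_buy_prob)
    moreover have "(\<integral>\<^sup>+v. h i v \<partial>D i) = surplus i k"
      by (simp add: h_def surplus_def)
    ultimately show ?thesis
      using i by (subst prod.remove[of _ i]) auto
  qed
  also have "\<dots> = surplus i k * ennreal (\<Prod>j\<in>{..<n} - {i}. 1 - t * mean_buy_prob j k)"
    using t k mean_buy_prob_nonneg mean_buy_prob_le_1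
    by (subst prod_ennreal) (auto simp: mult_le_one)
  finally show ?thesis .
qed

lemma borel_measurable_gain_at:
  assumes i: "i < n" and k: "k < m"
  shows "(\<lambda>(V, t). ennreal (gain_at i k V t)) \<in> borel_measurable (P \<Otimes>\<^sub>M unif01)"
proof -
  have comp: "(\<lambda>x. fst x j) \<in> measurable (P \<Otimes>\<^sub>M unif01) (D j)" if "j < n" for j
    using that by (intro measurable_compose[OF measurable_fst measurable_component_singleton]) auto
  have [measurable]: "snd \<in> borel_measurable (P \<Otimes>\<^sub>M unif01)"
    using measurable_snd[of P unif01] by (simp add: measurable_cong_sets[OF refl sets_unif01])
  note [measurable] = measurable_compose[OF comp[OF i] measurable_component_value[OF i k]]
    measurable_compose[OF comp[OF i] borel_measurable_rec_prob[OF i]]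
  have "(\<lambda>x. \<Prod>j\<in>{..<n} - {i}. 1 - snd x * buy_prob j k (fst x j)) \<in> borel_measurable (P \<Otimes>\<^sub>M unif01)"
  proof (rule borel_measurable_prod)
    fix j assume "j \<in> {..<n} - {i}"
    then have [measurable]: "(\<lambda>x. buy_prob j k (fst x j)) \<in> borel_measurable (P \<Otimes>\<^sub>M unif01)"
      using measurable_compose[OF comp borel_measurable_buy_prob] k by simp
    show "(\<lambda>x. 1 - snd x * buy_prob j k (fst x j)) \<in> borel_measurable (P \<Otimes>\<^sub>M unif01)"
      by measurable
  qed
  then show ?thesis
    unfolding gain_at_def case_prod_beta' by measurable
qed

lemma nn_integral_values_arrival_gain_at:
  assumes i: "i < n" and k: "k < m"
  shows "(\<integral>\<^sup>+V. (\<integral>\<^sup>+t. ennreal (gain_at i k V t) \<partial>unif01) \<partial>P)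
    = (\<integral>\<^sup>+t. surplus i k * ennreal (\<Prod>j\<in>{..<n} - {i}. 1 - t * mean_buy_prob j k) \<partial>unif01)"
proof -
  interpret P: prob_space P by (rule prob_space_P)
  interpret U: prob_space unif01 by (rule prob_space_unif01)
  interpret pair_sigma_finite P unif01 by unfold_locales
  have "(\<integral>\<^sup>+V. (\<integral>\<^sup>+t. ennreal (gain_at i k V t) \<partial>unif01) \<partial>P)
      = (\<integral>\<^sup>+t. (\<integral>\<^sup>+V. ennreal (gain_at i k V t) \<partial>P) \<partial>unif01)"
    using borel_measurable_gain_at[OF i k] by (intro Fubini'[symmetric]) simp
  also have "\<dots> = (\<integral>\<^sup>+t. surplus i k * ennreal (\<Prod>j\<in>{..<n} - {i}. 1 - t * mean_buy_prob j k) \<partial>unif01)"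
  proof (rule nn_integral_cong_AE)
    show "AE t in unif01. (\<integral>\<^sup>+V. ennreal (gain_at i k V t) \<partial>P)
        = surplus i k * ennreal (\<Prod>j\<in>{..<n} - {i}. 1 - t * mean_buy_prob j k)"
      using AE_unif01_in_unit by eventually_elim (use i k in \<open>simp add: nn_integral_gain_at_values\<close>)
  qed
  finally show ?thesis .
qed

lemma borel_measurable_sold_UW: "k < m \<Longrightarrow> (\<lambda>V. sold_UW k V) \<in> borel_measurable P"
  unfolding sold_UW_def
  by (intro borel_measurable_diff borel_measurable_const borel_measurable_PiM_prod)
    (auto intro: borel_measurable_buy_prob)

lemma ennreal_alg_welfare_ge:
  "(\<Sum>k<m. ennreal (\<tau> k) * ennreal (sold k V U W)) + (\<Sum>k<m. \<Sum>i<n. ennreal (gain i k V T U W))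
    \<le> ennreal (alg_welfare n m D M \<tau> \<theta> V T U W)"
proof -
  have "(\<Sum>k<m. ennreal (\<tau> k) * ennreal (sold k V U W)) + (\<Sum>k<m. \<Sum>i<n. ennreal (gain i k V T U W))
      = ennreal ((\<Sum>k<m. \<tau> k * sold k V U W) + (\<Sum>k<m. \<Sum>i<n. gain i k V T U W))"
    using price_nonneg sold_nonneg gain_nonneg
    by (simp add: ennreal_mult[symmetric] sum_nonneg ennreal_plus[symmetric] del: ennreal_plus)
  also have "\<dots> \<le> ennreal (alg_welfare n m D M \<tau> \<theta> V T U W)"
    by (intro ennreal_leI alg_welfare_ge)
  finally show ?thesis .
qed

lemma nn_integral_alg_welfare_ge:
  "(\<Sum>k<m. ennreal (\<tau> k) * ennreal (1 - (\<Prod>j<n. 1 - mean_buy_prob j k))) +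
   (\<Sum>k<m. \<Sum>i<n. \<integral>\<^sup>+t. surplus i k * ennreal (\<Prod>j\<in>{..<n} - {i}. 1 - t * mean_buy_prob j k) \<partial>unif01)
   \<le> (\<integral>\<^sup>+V. (\<integral>\<^sup>+T. (\<integral>\<^sup>+U. (\<integral>\<^sup>+W.
        ennreal (alg_welfare n m D M \<tau> \<theta> V T U W) \<partial>unif_vec n) \<partial>unif_vec n) \<partial>unif_vec n) \<partial>P)"
  (is "?lhs \<le> ?rhs")
proof -
  interpret U: prob_space unif01 by (rule prob_space_unif01)
  interpret T: prob_space "unif_vec n" by (rule prob_space_unif_vec)
  let ?L = "\<lambda>V T U W. (\<Sum>k<m. ennreal (\<tau> k) * ennreal (sold k V U W)) + (\<Sum>k<m. \<Sum>i<n. ennreal (gain i k V T U W))"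
  have "(\<integral>\<^sup>+V. (\<integral>\<^sup>+T. (\<integral>\<^sup>+U. (\<integral>\<^sup>+W. ?L V T U W \<partial>unif_vec n) \<partial>unif_vec n) \<partial>unif_vec n) \<partial>P) \<le> ?rhs"
    using ennreal_alg_welfare_ge by (intro nn_integral_mono)
  moreover have "(\<integral>\<^sup>+W. ?L V T U W \<partial>unif_vec n) =
      (\<Sum>k<m. ennreal (\<tau> k) * ennreal (sold_W k V U)) + (\<Sum>k<m. \<Sum>i<n. ennreal (gain_W i k V T U))" for V T U
    using borel_measurable_sold_tie_coins borel_measurable_gain_tie_coins
    by (simp add: nn_integral_lincomb_plus_double_sum nn_integral_sold_tie_coins nn_integral_gain_tie_coins)
  moreover have "(\<integral>\<^sup>+U. (\<Sum>k<m. ennreal (\<tau> k) * ennreal (sold_W k V U)) + (\<Sum>k<m. \<Sum>i<n. ennreal (gain_W i k V T U)) \<partial>unif_vec n) =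
      (\<Sum>k<m. ennreal (\<tau> k) * ennreal (sold_UW k V)) + (\<Sum>k<m. \<Sum>i<n. ennreal (gain_UW i k V T))"
    if "V \<in> space P" for V T
    using borel_measurable_sold_W_selection_coins borel_measurable_gain_W_selection_coins
    by (simp add: nn_integral_lincomb_plus_double_sum nn_integral_sold_W_selection_coins[OF that]
        nn_integral_gain_W_selection_coins[OF that])
  moreover have "(\<integral>\<^sup>+T. (\<Sum>k<m. ennreal (\<tau> k) * ennreal (sold_UW k V)) + (\<Sum>k<m. \<Sum>i<n. ennreal (gain_UW i k V T)) \<partial>unif_vec n) =
      (\<Sum>k<m. ennreal (\<tau> k) * ennreal (sold_UW k V)) + (\<Sum>k<m. \<Sum>i<n. \<integral>\<^sup>+t. ennreal (gain_at i k V t) \<partial>unif01)" for V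
    using measurable_compose[OF borel_measurable_gain_UW_arrival_times measurable_ennreal]
    by (subst nn_integral_lincomb_plus_double_sum[where f="\<lambda>k T. ennreal (sold_UW k V)"])
      (simp_all add: T.emeasure_space_1 nn_integral_gain_UW_arrival_times)
  moreover have "(\<integral>\<^sup>+V. (\<Sum>k<m. ennreal (\<tau> k) * ennreal (sold_UW k V))
      + (\<Sum>k<m. \<Sum>i<n. \<integral>\<^sup>+t. ennreal (gain_at i k V t) \<partial>unif01) \<partial>P) = ?lhs"
    using measurable_compose[OF borel_measurable_sold_UW measurable_ennreal]
      U.borel_measurable_nn_integral[OF borel_measurable_gain_at]
    by (subst nn_integral_lincomb_plus_double_sum[where f="\<lambda>k V. ennreal (sold_UW k V)"])
      (simp_all add: nn_integral_sold_UW nn_integral_values_arrival_gain_at)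
  ultimately show ?thesis
    by (simp cong: nn_integral_cong)
qed

lemma mean_buy_prob_eq:
  assumes j: "j < n" and k: "k < m"
  shows "mean_buy_prob j k = mass_above j k (\<tau> k) + \<theta> k * (mass_from j k (\<tau> k) - mass_above j k (\<tau> k))"
proof -
  let ?A = "\<lambda>v. p j v k * (if \<tau> k < v k then 1 else 0)" and ?B = "\<lambda>v. p j v k * (if \<tau> k \<le> v k then 1 else 0)"
  have "buy_prob j k = (\<lambda>v. ?A v + \<theta> k * (?B v - ?A v))"
    unfolding buy_prob_def accept_prob_def by (auto simp: algebra_simps)
  moreover have A: "integrable (D j) ?A" and B: "integrable (D j) ?B"
    using j k by (auto intro!: integrable_rec_prob_times)
  ultimately show ?thesis
    unfolding mean_buy_prob_def mass_above_def mass_from_def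
    by (simp add: Bochner_Integration.integral_add[OF A integrable_mult_right[OF Bochner_Integration.integrable_diff[OF B A]]]
        Bochner_Integration.integral_diff[OF B A])
qed

lemma prod_one_minus_mean_buy_prob: "k < m \<Longrightarrow> (\<Prod>j<n. 1 - mean_buy_prob j k) = unsold_prob k (\<tau> k) (\<theta> k)"
  unfolding unsold_prob_def by (simp add: mean_buy_prob_eq)

lemma nn_integral_value_le:
  assumes i: "i < n" and k: "k < m"
  shows "(\<integral>\<^sup>+y. ennreal (y k) * ennreal (p i y k) \<partial>D i)
    \<le> ennreal (\<tau> k) * (\<integral>\<^sup>+y. ennreal (p i y k) \<partial>D i) + surplus i k"
proof -
  note [measurable] = borel_measurable_rec_prob[OF i] measurable_component_value[OF i k]
  have "(\<integral>\<^sup>+y. ennreal (y k) * ennreal (p i y k) \<partial>D i)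
      \<le> (\<integral>\<^sup>+y. ennreal (\<tau> k) * ennreal (p i y k) + ennreal (max 0 (y k - \<tau> k) * p i y k) \<partial>D i)"
  proof (rule nn_integral_mono)
    fix y
    have "ennreal (y k * p i y k) \<le> ennreal (\<tau> k * p i y k + max 0 (y k - \<tau> k) * p i y k)"
      using rec_prob_nonneg[of i y k] by (intro ennreal_leI) (simp add: mult_right_mono flip: distrib_right)
    then show "ennreal (y k) * ennreal (p i y k) \<le> ennreal (\<tau> k) * ennreal (p i y k) + ennreal (max 0 (y k - \<tau> k) * p i y k)"
      using rec_prob_nonneg[of i y k] price_nonneg[of k]
      by (simp add: ennreal_mult''[symmetric] ennreal_mult'[symmetric] ennreal_plus[symmetric] del: ennreal_plus)
  qed
  also have "\<dots> = ennreal (\<tau> k) * (\<integral>\<^sup>+y. ennreal (p i y k) \<partial>D i) + surplus i k"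
    unfolding surplus_def by (simp add: nn_integral_add nn_integral_cmult)
  finally show ?thesis .
qed

lemma item_share_le:
  assumes k: "k < m" and e: "exp (-1) \<le> (\<Prod>j<n. 1 - mean_buy_prob j k)"
    and \<tau>: "\<tau> k = 0 \<or> (\<Prod>j<n. 1 - mean_buy_prob j k) \<le> exp (-1)"
  shows "ennreal (1 - exp (-1)) * (\<Sum>i<n. \<integral>\<^sup>+y. ennreal (y k) * ennreal (p i y k) \<partial>D i)
    \<le> ennreal (\<tau> k) * ennreal (1 - (\<Prod>j<n. 1 - mean_buy_prob j k)) +
      (\<Sum>i<n. \<integral>\<^sup>+t. surplus i k * ennreal (\<Prod>j\<in>{..<n} - {i}. 1 - t * mean_buy_prob j k) \<partial>unif01)"
proof -
  let ?e = "ennreal (1 - exp (-1))"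
  have a: "0 \<le> mean_buy_prob j k \<and> mean_buy_prob j k \<le> 1" if "j < n" for j
    using that k mean_buy_prob_nonneg mean_buy_prob_le_1 by auto
  have gain: "?e * surplus i k \<le> (\<integral>\<^sup>+t. surplus i k * ennreal (\<Prod>j\<in>{..<n} - {i}. 1 - t * mean_buy_prob j k) \<partial>unif01)"
    if i: "i < n" for i
  proof (rule nn_integral_unif01_prod_ge)
    have "(\<Prod>j<n. 1 - mean_buy_prob j k) = (1 - mean_buy_prob i k) * (\<Prod>j\<in>{..<n} - {i}. 1 - mean_buy_prob j k)"
      using i by (subst prod.remove[of _ i]) auto
    also have "\<dots> \<le> (\<Prod>j\<in>{..<n} - {i}. 1 - mean_buy_prob j k)"
      using a i by (intro mult_left_le_one_le prod_nonneg) auto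
    finally show "exp (-1) \<le> (\<Prod>j\<in>{..<n} - {i}. 1 - mean_buy_prob j k)" using e by simp
  qed (use a in auto)
  have revenue: "?e * ennreal (\<tau> k) \<le> ennreal (\<tau> k) * ennreal (1 - (\<Prod>j<n. 1 - mean_buy_prob j k))"
    using \<tau>
  proof
    assume "(\<Prod>j<n. 1 - mean_buy_prob j k) \<le> exp (-1)"
    then show ?thesis by (auto simp: mult.commute intro!: mult_left_mono ennreal_leI)
  qed simp
  have "?e * (\<Sum>i<n. \<integral>\<^sup>+y. ennreal (y k) * ennreal (p i y k) \<partial>D i)
      \<le> ?e * (\<Sum>i<n. ennreal (\<tau> k) * (\<integral>\<^sup>+y. ennreal (p i y k) \<partial>D i) + surplus i k)"
    using k by (intro mult_left_mono sum_mono nn_integral_value_le) auto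
  also have "\<dots> = ?e * ennreal (\<tau> k) * (\<Sum>i<n. \<integral>\<^sup>+y. ennreal (p i y k) \<partial>D i) + (\<Sum>i<n. ?e * surplus i k)"
    by (simp add: sum.distrib sum_distrib_left distrib_left mult.assoc)
  also have "\<dots> \<le> ?e * ennreal (\<tau> k) * 1 + (\<Sum>i<n. ?e * surplus i k)"
    by (intro add_right_mono mult_left_mono sum_nn_integral_rec_prob_le_1) auto
  also have "\<dots> \<le> ennreal (\<tau> k) * ennreal (1 - (\<Prod>j<n. 1 - mean_buy_prob j k)) +
      (\<Sum>i<n. \<integral>\<^sup>+t. surplus i k * ennreal (\<Prod>j\<in>{..<n} - {i}. 1 - t * mean_buy_prob j k) \<partial>unif01)"
    using revenue gain by (intro add_mono sum_mono) auto
  finally show ?thesis .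
qed

lemma expected_welfare_ge_OPT:
  assumes "balanced \<tau> \<theta>"
  shows "ennreal (1 - exp (-1)) * (\<integral>\<^sup>+V. ennreal (OPT M V) \<partial>P)
    \<le> (\<integral>\<^sup>+V. (\<integral>\<^sup>+T. (\<integral>\<^sup>+U. (\<integral>\<^sup>+W.
          ennreal (alg_welfare n m D M \<tau> \<theta> V T U W) \<partial>unif_vec n) \<partial>unif_vec n) \<partial>unif_vec n) \<partial>P)"
proof -
  have "ennreal (1 - exp (-1)) * (\<integral>\<^sup>+V. ennreal (OPT M V) \<partial>P)
      \<le> (\<Sum>k<m. ennreal (1 - exp (-1)) * (\<Sum>i<n. \<integral>\<^sup>+y. ennreal (y k) * ennreal (p i y k) \<partial>D i))"
    unfolding sum_distrib_left[symmetric] by (intro mult_left_mono nn_integral_OPT_le) auto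
  also have "\<dots> \<le> (\<Sum>k<m. ennreal (\<tau> k) * ennreal (1 - (\<Prod>j<n. 1 - mean_buy_prob j k)) +
      (\<Sum>i<n. \<integral>\<^sup>+t. surplus i k * ennreal (\<Prod>j\<in>{..<n} - {i}. 1 - t * mean_buy_prob j k) \<partial>unif01))"
    using assms unfolding balanced_def by (intro sum_mono item_share_le) (auto simp: prod_one_minus_mean_buy_prob)
  also have "\<dots> \<le> (\<integral>\<^sup>+V. (\<integral>\<^sup>+T. (\<integral>\<^sup>+U. (\<integral>\<^sup>+W.
          ennreal (alg_welfare n m D M \<tau> \<theta> V T U W) \<partial>unif_vec n) \<partial>unif_vec n) \<partial>unif_vec n) \<partial>P)"
    using nn_integral_alg_welfare_ge by (simp add: sum.distrib)
  finally show ?thesis .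
qed

end

theorem theorem6:
  fixes n m :: nat
    and D :: "nat \<Rightarrow> (nat \<Rightarrow> real) measure"
    and M :: "(nat \<Rightarrow> nat \<Rightarrow> real) \<Rightarrow> (nat \<times> nat) set"
  assumes D_prob: "\<And>i. i < n \<Longrightarrow> prob_space (D i)"
    and D_sets: "\<And>i. i < n \<Longrightarrow> sets (D i) = sets (value_space m)"
    and D_nonneg: "\<And>i. i < n \<Longrightarrow> (AE x in D i. \<forall>k<m. 0 \<le> x k)"
    and M_max: "\<And>V. is_max_weight_matching n m V (M V)"
    and M_meas: "\<And>i k. {V \<in> space (profile_space n m). (i, k) \<in> M V} \<in> sets (profile_space n m)"
  shows "\<exists>\<tau> \<theta> :: nat \<Rightarrow> real.
           (\<forall>k<m. 0 \<le> \<tau> k \<and> 0 \<le> \<theta> k \<and> \<theta> k \<le> 1) \<and>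
           (\<integral>\<^sup>+ V. (\<integral>\<^sup>+ T. (\<integral>\<^sup>+ U. (\<integral>\<^sup>+ W.
                 ennreal (alg_welfare n m D M \<tau> \<theta> V T U W) \<partial>unif_vec n) \<partial>unif_vec n) \<partial>unif_vec n)
              \<partial>(\<Pi>\<^sub>M i\<in>{..<n}. D i))
           \<ge> ennreal (1 - exp (-1)) * (\<integral>\<^sup>+ V. ennreal (OPT M V) \<partial>(\<Pi>\<^sub>M i\<in>{..<n}. D i))"
proof -
  have matching: "\<And>V. is_matching n m (M V)"
    using M_max unfolding is_max_weight_matching_def by blast
  interpret prophet_secretary n m D M
    using D_prob D_sets matching M_meas by (rule prophet_secretary.intro)
  obtain \<tau> \<theta> where prices: "\<And>k. 0 \<le> \<tau> k \<and> 0 \<le> \<theta> k \<and> \<theta> k \<le> 1" and "balanced \<tau> \<theta>"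
    using exists_balanced_prices by blast
  interpret fixed_prices n m D M \<tau> \<theta>
    by (intro fixed_prices.intro prophet_secretary_axioms fixed_prices_axioms.intro) (use prices in auto)
  have "\<forall>k<m. 0 \<le> \<tau> k \<and> 0 \<le> \<theta> k \<and> \<theta> k \<le> 1" using prices by blast
  with expected_welfare_ge_OPT[OF \<open>balanced \<tau> \<theta>\<close>] show ?thesis by blast
qed

end
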